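(* (1) $\varepsilon^{cop}=\varepsilon$; (2) $S(A)\subseteq A$, $S^{cop}(A)\subseteq A$ and $S^{cop}=S^{-1}$.
   Context: Let $(A,\Delta)$ be a generalized multiplier Hopf coquasigroup: $A$ an associative algebra over a field $k$ with non-degenerate product, $\Delta:A\to M(A\otimes A)$ an algebra homomorphism (not necessarily coassociative) with Galois maps $T_{1}(a\otimes b)=\Delta(a)(1\otimes b)$, $T_{2}(a\otimes b)=(a\otimes 1)\Delta(b)$ in $A\otimes A$, $\varepsilon:A\to k$ linear with $(\varepsilon\otimes\iota)T_{1}(a\otimes b)=ab=(\iota\otimes\varepsilon)T_{2}(a\otimes b)$, $T_{1},T_{2}$ bijective, $T_{1}^{-1}=(\iota\otimes\varepsilon\otimes\iota)(\iota\otimes T_{1}^{-1})(\Delta\otimes\iota)$ and $T_{2}^{-1}=(\iota\otimes\varepsilon\otimes\iota)(T_{2}^{-1}\otimes\iota)(\iota\otimes\Delta)$; its antipode $S:A\to M(A)$ is defined by $S(a)b=(\varepsilon\otimes\iota)T_{1}^{-1}(a\otimes b)$. Assume $(A,\Delta)$ is regular, i.e. $(A,\Delta^{cop})$ (with $\Delta^{cop}$ the flipped comultiplication) is again a generalized multiplier Hopf coquasigroup, and let $\varepsilon^{cop}$ and $S^{cop}$ be its associated counit and antipode. *)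

theory Defs
  imports Complex_Main
begin

text \<open>Algebraic tensor products over a field, characterised intrinsically:
  tz is bilinear, its image spans Z, and sums of tensors with linearly
  independent first legs vanish only if all second legs vanish.\<close>

definition is_tensor ::
  "('k::field \<Rightarrow> 'x::ab_group_add \<Rightarrow> 'x) \<Rightarrow> ('k \<Rightarrow> 'y::ab_group_add \<Rightarrow> 'y)
   \<Rightarrow> ('k \<Rightarrow> 'z::ab_group_add \<Rightarrow> 'z) \<Rightarrow> ('x \<Rightarrow> 'y \<Rightarrow> 'z) \<Rightarrow> bool" where
  "is_tensor sX sY sZ tz \<longleftrightarrow>
     vector_space sX \<and> vector_space sY \<and> vector_space sZ \<and>
     (\<forall>y. Vector_Spaces.linear sX sZ (\<lambda>x. tz x y)) \<and> (\<forall>x. Vector_Spaces.linear sY sZ (tz x)) \<and>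
     module.span sZ {tz x y | x y. True} = UNIV \<and>
     (\<forall>n (xs::nat \<Rightarrow> 'x) (ys::nat \<Rightarrow> 'y).
        inj_on xs {..<n} \<and> \<not> module.dependent sX (xs ` {..<n}) \<and>
        (\<Sum>i<n. tz (xs i) (ys i)) = 0 \<longrightarrow> (\<forall>i<n. ys i = 0))"

definition tlift ::
  "('k::field \<Rightarrow> 'z::ab_group_add \<Rightarrow> 'z) \<Rightarrow> ('k \<Rightarrow> 'w::ab_group_add \<Rightarrow> 'w)
   \<Rightarrow> ('x \<Rightarrow> 'y \<Rightarrow> 'z) \<Rightarrow> ('x \<Rightarrow> 'y \<Rightarrow> 'w) \<Rightarrow> 'z \<Rightarrow> 'w" where
  "tlift sZ sW tz h = (THE g. Vector_Spaces.linear sZ sW g \<and> (\<forall>x y. g (tz x y) = h x y))"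

definition tmul ::
  "('k::field \<Rightarrow> 't::ab_group_add \<Rightarrow> 't) \<Rightarrow> ('a \<Rightarrow> 'a \<Rightarrow> 't) \<Rightarrow> ('a \<Rightarrow> 'a \<Rightarrow> 'a)
   \<Rightarrow> 't \<Rightarrow> 't \<Rightarrow> 't" where
  "tmul sT tp m x y =
     tlift sT sT tp (\<lambda>a b. tlift sT sT tp (\<lambda>c d. tp (m a c) (m b d)) y) x"

text \<open>x \<mapsto> (1\<otimes>b)x,  x \<mapsto> x(a\<otimes>1),  x \<mapsto> (c\<otimes>1)x,  x \<mapsto> x(1\<otimes>c), and the flip.\<close>
definition mul_1b where "mul_1b sT tp m b = tlift sT sT tp (\<lambda>c d. tp c (m b d))"
definition mul_a1 where "mul_a1 sT tp m a = tlift sT sT tp (\<lambda>c d. tp (m c a) d)"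
definition lmul_c1 where "lmul_c1 sT tp m c = tlift sT sT tp (\<lambda>x y. tp (m c x) y)"
definition rmul_1c where "rmul_1c sT tp m c = tlift sT sT tp (\<lambda>x y. tp x (m y c))"
definition tflip where "tflip sT tp = tlift sT sT tp (\<lambda>x y. tp y x)"

text \<open>Galois maps T1(a\<otimes>b) = \<Delta>(a)(1\<otimes>b), T2(a\<otimes>b) = (a\<otimes>1)\<Delta>(b), where the
  multiplier \<Delta>(a) of A\<otimes>A is given by its left action DL a and right action DR a.\<close>
definition gT1 where
  "gT1 sT tp m DL = tlift sT sT tp
     (\<lambda>a b. THE y. \<forall>x. tmul sT tp m y x = DL a (mul_1b sT tp m b x))"
definition gT2 where
  "gT2 sT tp m DR = tlift sT sT tp
     (\<lambda>a b. THE y. \<forall>x. tmul sT tp m x y = DR b (mul_a1 sT tp m a x))"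

definition epsI where "epsI sA sT tp eps = tlift sT sA tp (\<lambda>c d. sA (eps c) d)"
definition Ieps where "Ieps sA sT tp eps = tlift sT sA tp (\<lambda>c d. sA (eps d) c)"

text \<open>A\<otimes>A\<otimes>A is modelled as A\<otimes>(A\<otimes>A) with tensor map tq.
  assoc_l w z = w \<otimes> z ; idF F = \<iota>\<otimes>F ; Fid G = G\<otimes>\<iota>.\<close>
definition assoc_l where
  "assoc_l sT sU tp tq w z = tlift sT sU tp (\<lambda>x y. tq x (tp y z)) w"
definition idF where
  "idF sT sU tp tq F = tlift sU sT tq (\<lambda>x w. tp x (F w))"
definition Fid where
  "Fid sT sU tp tq G =
     tlift sU sT tq (\<lambda>x w. tlift sT sT tp (\<lambda>y z. tp (G (tp x y)) z) w)"

definition gmhc ::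
  "('k::field \<Rightarrow> 'a::ab_group_add \<Rightarrow> 'a) \<Rightarrow> ('k \<Rightarrow> 't::ab_group_add \<Rightarrow> 't)
   \<Rightarrow> ('k \<Rightarrow> 'u::ab_group_add \<Rightarrow> 'u) \<Rightarrow> ('a \<Rightarrow> 'a \<Rightarrow> 'a)
   \<Rightarrow> ('a \<Rightarrow> 'a \<Rightarrow> 't) \<Rightarrow> ('a \<Rightarrow> 't \<Rightarrow> 'u)
   \<Rightarrow> ('a \<Rightarrow> 't \<Rightarrow> 't) \<Rightarrow> ('a \<Rightarrow> 't \<Rightarrow> 't) \<Rightarrow> ('a \<Rightarrow> 'k) \<Rightarrow> bool" where
  "gmhc sA sT sU m tp tq DL DR eps \<longleftrightarrow>
     vector_space sA \<and>
     (\<forall>b. Vector_Spaces.linear sA sA (\<lambda>a. m a b)) \<and> (\<forall>a. Vector_Spaces.linear sA sA (m a)) \<and>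
     (\<forall>a b c. m (m a b) c = m a (m b c)) \<and>
     (\<forall>a. (\<forall>b. m a b = 0) \<longrightarrow> a = 0) \<and> (\<forall>a. (\<forall>b. m b a = 0) \<longrightarrow> a = 0) \<and>
     is_tensor sA sA sT tp \<and> is_tensor sA sT sU tq \<and>
     (\<forall>a. Vector_Spaces.linear sT sT (DL a) \<and> Vector_Spaces.linear sT sT (DR a) \<and>
          (\<forall>x y. tmul sT tp m (DR a x) y = tmul sT tp m x (DL a y))) \<and>
     (\<forall>x. Vector_Spaces.linear sA sT (\<lambda>a. DL a x) \<and> Vector_Spaces.linear sA sT (\<lambda>a. DR a x)) \<and>
     (\<forall>a b. DL (m a b) = DL a \<circ> DL b \<and> DR (m a b) = DR b \<circ> DR a) \<and>
     (\<forall>a b. \<exists>y. \<forall>x. tmul sT tp m y x = DL a (mul_1b sT tp m b x)) \<and>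
     (\<forall>a b. \<exists>y. \<forall>x. tmul sT tp m x y = DR b (mul_a1 sT tp m a x)) \<and>
     Vector_Spaces.linear sA (*) eps \<and>
     (\<forall>a b. epsI sA sT tp eps (gT1 sT tp m DL (tp a b)) = m a b) \<and>
     (\<forall>a b. Ieps sA sT tp eps (gT2 sT tp m DR (tp a b)) = m a b) \<and>
     bij (gT1 sT tp m DL) \<and> bij (gT2 sT tp m DR) \<and>
     (\<forall>c a b. lmul_c1 sT tp m c (inv (gT1 sT tp m DL) (tp a b)) =
        idF sT sU tp tq (epsI sA sT tp eps \<circ> inv (gT1 sT tp m DL))
          (assoc_l sT sU tp tq (gT2 sT tp m DR (tp c a)) b)) \<and>
     (\<forall>c a b. rmul_1c sT tp m c (inv (gT2 sT tp m DR) (tp a b)) =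
        Fid sT sU tp tq (Ieps sA sT tp eps \<circ> inv (gT2 sT tp m DR))
          (tq a (gT1 sT tp m DL (tp b c))))"

text \<open>Antipode, given by its left action: S(a)b = (\<epsilon>\<otimes>\<iota>)T1^{-1}(a\<otimes>b).\<close>
definition gS where
  "gS sA sT tp m DL eps a b = epsI sA sT tp eps (inv (gT1 sT tp m DL) (tp a b))"

definition copL where "copL sT tp DL a x = tflip sT tp (DL a (tflip sT tp x))"

end

theory Submission
  imports Defs
begin

text \<open>
  Identities between linear maps on \<open>A \<otimes> A\<close> are checked on simple tensors, and elements of
  \<open>A \<otimes> A\<close> are compared through their products with all of \<open>A \<otimes> A\<close>, which is non-degenerate
  because the product of \<open>A\<close> is.

  Let \<open>T3 (p \<otimes> q) = (1 \<otimes> p)\<Delta>(q)\<close> and \<open>T4 (a \<otimes> b) = \<Delta>(a)(b \<otimes> 1)\<close> be the Galois maps of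
  \<open>\<Delta>\<^sup>c\<^sup>o\<^sup>p\<close>, flipped back. Since \<open>T2 (c \<otimes> a)(b \<otimes> 1) = (c \<otimes> 1)T4 (a \<otimes> b)\<close>, applying
  \<open>\<iota> \<otimes> \<epsilon>\<close> and \<open>\<iota> \<otimes> \<epsilon>\<^sup>c\<^sup>o\<^sup>p\<close> to this element gives \<open>c a b\<close> in both cases, so
  \<open>\<epsilon>\<^sup>c\<^sup>o\<^sup>p = \<epsilon>\<close> by non-degeneracy.

  Fix \<open>b\<^sub>0\<close> with \<open>\<epsilon>(b\<^sub>0) = 1\<close>. The coquasigroup axioms give
  \<open>(y \<otimes> 1) T2\<^sup>-\<^sup>1 T3 T1\<^sup>-\<^sup>1 (a \<otimes> b\<^sub>0) = y S(a) \<otimes> b\<^sub>0\<close>, so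
  \<open>(\<iota> \<otimes> \<epsilon>) T2\<^sup>-\<^sup>1 T3 T1\<^sup>-\<^sup>1 (a \<otimes> b\<^sub>0)\<close> is an element of \<open>A\<close> representing \<open>S(a)\<close>; the same
  construction for \<open>\<Delta>\<^sup>c\<^sup>o\<^sup>p\<close> represents \<open>S\<^sup>c\<^sup>o\<^sup>p(a)\<close>. The antipode identities
  \<open>\<mu>(S \<otimes> \<iota>)(\<Delta>(a)(b \<otimes> 1)) = \<epsilon>(a)S(b)\<close> and \<open>\<mu>(\<iota> \<otimes> S)((1 \<otimes> a)\<Delta>(b)) = \<epsilon>(b)S(a)\<close>
  show that \<open>S(S\<^sup>c\<^sup>o\<^sup>p(a)) - a\<close> is annihilated by every \<open>S(x)\<close> on the left, and
  \<open>S(S\<^sup>c\<^sup>o\<^sup>p(b)) - b\<close> by every \<open>S(y)\<close> on the right. As every \<open>y\<close> equals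
  \<open>\<mu>(S \<otimes> \<iota>)T1(b\<^sub>0 \<otimes> y)\<close>, non-degeneracy yields \<open>S \<circ> S\<^sup>c\<^sup>o\<^sup>p = id\<close>, and \<open>S\<^sup>c\<^sup>o\<^sup>p \<circ> S = id\<close>
  by symmetry.
\<close>

section \<open>Linear maps\<close>

lemma linI:
  assumes "vector_space s1" and "vector_space s2"
    and "\<And>x y. f (x + y) = f x + f y" and "\<And>c x. f (s1 c x) = s2 c (f x)"
  shows "Vector_Spaces.linear s1 s2 f"
  using assms unfolding Vector_Spaces.linear_iff by blast

lemmas lin_add = module_hom.add[OF module_hom_linearI]
lemmas lin_scale = module_hom.scale[OF module_hom_linearI]
lemmas lin_zero = module_hom.zero[OF module_hom_linearI]
lemmas lin_diff = module_hom.diff[OF module_hom_linearI]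
lemmas lin_sum = module_hom.sum[OF module_hom_linearI]

lemma linear_imp_vector_space_pair: "Vector_Spaces.linear s1 s2 f \<Longrightarrow> vector_space_pair s1 s2"
  by (simp add: Vector_Spaces.linear_iff vector_space_pair_def)

lemma lin_comp:
  "Vector_Spaces.linear s1 s2 f \<Longrightarrow> Vector_Spaces.linear s2 s3 g \<Longrightarrow>
   Vector_Spaces.linear s1 s3 (\<lambda>x. g (f x))"
  using Vector_Spaces.linear_compose[of s1 s2 f s3 g] by (simp add: o_def)

lemma lin_plus:
  "Vector_Spaces.linear s1 s2 f \<Longrightarrow> Vector_Spaces.linear s1 s2 g \<Longrightarrow>
   Vector_Spaces.linear s1 s2 (\<lambda>x. f x + g x)"
  by (rule vector_space_pair.linear_compose_add[OF linear_imp_vector_space_pair])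

lemma lin_scale_right:
  "Vector_Spaces.linear s1 s2 f \<Longrightarrow> Vector_Spaces.linear s1 s2 (\<lambda>x. s2 c (f x))"
  by (rule vector_space_pair.linear_compose_scale_right[OF linear_imp_vector_space_pair])

lemma lin_const_zero:
  "vector_space s1 \<Longrightarrow> vector_space s2 \<Longrightarrow> Vector_Spaces.linear s1 s2 (\<lambda>x. 0)"
  by (rule vector_space_pair.linear_zero) (simp add: vector_space_pair_def)

lemma lin_inv:
  assumes f: "Vector_Spaces.linear s1 s2 f" and "bij f"
  shows "Vector_Spaces.linear s2 s1 (inv f)"
proof (rule linI)
  have f_inv: "f (inv f y) = y" for y
    using \<open>bij f\<close> by (simp add: bij_is_surj surj_f_inv_f)
  have inv_f: "inv f (f x) = x" for x
    using \<open>bij f\<close> by (simp add: bij_is_inj)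
  show "inv f (x + y) = inv f x + inv f y" for x y
    by (metis f_inv inv_f lin_add[OF f])
  show "inv f (s2 c x) = s1 c (inv f x)" for c x
    by (metis f_inv inv_f lin_scale[OF f])
qed (use f in \<open>simp_all add: Vector_Spaces.linear_iff\<close>)

lemma vector_space_field: "vector_space ((*) :: 'k::field \<Rightarrow> 'k \<Rightarrow> 'k)"
  by unfold_locales (auto simp: algebra_simps)

lemma linear_functional_one:
  assumes "vector_space s" and "v \<noteq> 0"
  shows "\<exists>\<omega>. Vector_Spaces.linear s (*) \<omega> \<and> \<omega> v = 1"
proof -
  interpret vector_space_pair s "(*)"
    using assms(1) vector_space_field by (simp add: vector_space_pair_def)
  have "\<not> vs1.dependent {v}"
    using assms by (simp add: vector_space.dependent_single)
  from linear_independent_extend[OF this, of "\<lambda>_. 1"] show ?thesis by auto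
qed


section \<open>Tensor products\<close>

locale tensor_product =
  fixes sX :: "'k::field \<Rightarrow> 'x::ab_group_add \<Rightarrow> 'x"
    and sY :: "'k \<Rightarrow> 'y::ab_group_add \<Rightarrow> 'y"
    and sZ :: "'k \<Rightarrow> 'z::ab_group_add \<Rightarrow> 'z"
    and tz :: "'x \<Rightarrow> 'y \<Rightarrow> 'z"
  assumes is_tensor: "is_tensor sX sY sZ tz"
begin

sublocale X: vector_space sX using is_tensor by (simp add: is_tensor_def)
sublocale Y: vector_space sY using is_tensor by (simp add: is_tensor_def)
sublocale Z: vector_space sZ using is_tensor by (simp add: is_tensor_def)

lemma linear_tz_left: "Vector_Spaces.linear sX sZ (\<lambda>x. tz x y)"
  and linear_tz_right: "Vector_Spaces.linear sY sZ (tz x)"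
  and span_tensors: "Z.span {tz x y | x y. True} = UNIV"
  using is_tensor unfolding is_tensor_def by blast+

lemma tensor_sum_eq_zero:
  assumes F: "finite F" and indep: "X.independent F"
    and sum: "(\<Sum>b\<in>F. tz b (g b)) = 0" and "b \<in> F"
  shows "g b = 0"
proof -
  obtain n :: nat and xs where F_eq: "F = xs ` {..<n}" and inj: "inj_on xs {..<n}"
    using finite_imp_nat_seg_image_inj_on[OF F] unfolding lessThan_def by blast
  have "(\<Sum>i<n. tz (xs i) ((g \<circ> xs) i)) = 0"
    using sum inj by (simp add: F_eq sum.reindex)
  moreover have "\<forall>n (xs :: nat \<Rightarrow> 'x) (ys :: nat \<Rightarrow> 'y). inj_on xs {..<n} \<and> X.independent (xs ` {..<n}) \<and>
      (\<Sum>i<n. tz (xs i) (ys i)) = 0 \<longrightarrow> (\<forall>i<n. ys i = 0)"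
    using is_tensor unfolding is_tensor_def by blast
  ultimately have "\<forall>i<n. (g \<circ> xs) i = 0"
    using inj indep F_eq by blast
  then show ?thesis
    using \<open>b \<in> F\<close> F_eq by auto
qed

lemma linear_eq_on_tensors:
  assumes g1: "Vector_Spaces.linear sZ sW g1" and g2: "Vector_Spaces.linear sZ sW g2"
    and eq: "\<And>x y. g1 (tz x y) = g2 (tz x y)"
  shows "g1 = g2"
proof
  fix z
  interpret vector_space_pair sZ sW
    by (rule linear_imp_vector_space_pair[OF g1])
  have "z \<in> Z.span {tz x y | x y. True}"
    using span_tensors by simp
  then show "g1 z = g2 z"
    by (rule linear_eq_on[OF g1 g2]) (auto simp: eq)
qed

lemma tensor_basis_inj_on:
  assumes Bx: "X.independent Bx" and By: "Y.independent By"
  shows "inj_on (\<lambda>(b, c). tz b c) (Bx \<times> By)"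
proof (rule inj_onI, clarify)
  fix b c b' c'
  assume b: "b \<in> Bx" "c \<in> By" "b' \<in> Bx" "c' \<in> By" and eq: "tz b c = tz b' c'"
  have "0 \<notin> Bx" "0 \<notin> By"
    using Bx By X.dependent_zero Y.dependent_zero by blast+
  show "b = b' \<and> c = c'"
  proof (cases "b = b'")
    case True
    have "(\<Sum>x\<in>{b}. tz x (c - c')) = 0"
      using eq True by (simp add: lin_diff[OF linear_tz_right])
    moreover have "X.independent {b}"
      by (rule X.independent_mono[OF Bx]) (use b in auto)
    ultimately have "c - c' = 0"
      by (intro tensor_sum_eq_zero[of "{b}" "\<lambda>_. c - c'" b]) auto
    then show ?thesis using True by simp
  next
    case False
    have "(\<Sum>x\<in>{b, b'}. tz x (if x = b then c else - c')) = 0"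
      using eq False by (simp add: module_hom.neg[OF module_hom_linearI, OF linear_tz_right])
    moreover have "X.independent {b, b'}"
      by (rule X.independent_mono[OF Bx]) (use b in auto)
    ultimately have "(if b = b then c else - c') = 0"
      by (intro tensor_sum_eq_zero[of "{b, b'}" "\<lambda>x. if x = b then c else - c'" b]) auto
    then show ?thesis
      using \<open>0 \<notin> By\<close> b by simp
  qed
qed

lemma tensor_basis_independent:
  assumes Bx: "X.independent Bx" and By: "Y.independent By"
  shows "Z.independent ((\<lambda>(b, c). tz b c) ` (Bx \<times> By))"
  unfolding Z.independent_explicit_finite_subsets
proof (intro allI impI ballI)
  let ?pr = "\<lambda>(b, c). tz b c"
  fix S u v
  assume S: "S \<subseteq> ?pr ` (Bx \<times> By)" "finite S" and su: "(\<Sum>v\<in>S. sZ (u v) v) = 0" and "v \<in> S"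
  define G where "G = ?pr -` S \<inter> (Bx \<times> By)"
  have inj: "inj_on ?pr G"
    using tensor_basis_inj_on[OF Bx By] unfolding G_def by (rule inj_on_subset) auto
  have finG: "finite G"
    unfolding G_def by (rule finite_vimage_IntI[OF S(2) tensor_basis_inj_on[OF Bx By]])
  have SG: "S = ?pr ` G"
    using S(1) unfolding G_def by blast
  define Gb where "Gb b = {x \<in> G. fst x = b}" for b
  have "(\<Sum>v\<in>S. sZ (u v) v) = (\<Sum>x\<in>G. sZ (u (?pr x)) (?pr x))"
    unfolding SG using inj by (simp add: sum.reindex)
  also have "\<dots> = (\<Sum>b\<in>fst ` G. \<Sum>x\<in>Gb b. sZ (u (?pr x)) (?pr x))"
    unfolding Gb_def by (rule sum.group[symmetric]) (use finG in auto)
  also have "\<dots> = (\<Sum>b\<in>fst ` G. tz b (\<Sum>x\<in>Gb b. sY (u (?pr x)) (snd x)))"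
    by (intro sum.cong refl)
      (auto simp: lin_sum[OF linear_tz_right] lin_scale[OF linear_tz_right] Gb_def
        split: prod.splits intro!: sum.cong)
  finally have zero: "(\<Sum>b\<in>fst ` G. tz b (\<Sum>x\<in>Gb b. sY (u (?pr x)) (snd x))) = 0"
    using su by simp
  from \<open>v \<in> S\<close> obtain b c where bc: "(b, c) \<in> G" "v = tz b c"
    unfolding SG by auto
  have "X.independent (fst ` G)"
    by (rule X.independent_mono[OF Bx]) (auto simp: G_def)
  moreover have "b \<in> fst ` G"
    using bc by force
  ultimately have "(\<Sum>x\<in>Gb b. sY (u (?pr x)) (snd x)) = 0"
    using tensor_sum_eq_zero[OF finite_imageI[OF finG] _ zero] by blast
  moreover have "inj_on snd (Gb b)"
    unfolding Gb_def inj_on_def by (simp add: prod_eq_iff)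
  ultimately have sum_zero: "(\<Sum>c\<in>snd ` Gb b. sY (u (tz b c)) c) = 0"
    by (simp add: sum.reindex Gb_def split_beta)
  have "snd ` Gb b \<subseteq> By"
    unfolding Gb_def G_def by auto
  moreover have "finite (snd ` Gb b)"
    using finG unfolding Gb_def by auto
  ultimately have "\<forall>w. (\<Sum>v\<in>snd ` Gb b. sY (w v) v) = 0 \<longrightarrow> (\<forall>v\<in>snd ` Gb b. w v = 0)"
    using By unfolding Y.independent_explicit_finite_subsets by blast
  moreover have "c \<in> snd ` Gb b"
    using bc unfolding Gb_def by force
  ultimately have "u (tz b c) = 0"
    using sum_zero by (auto dest: spec[where x = "\<lambda>c. u (tz b c)"])
  then show "u v = 0"
    using bc by simp
qed

lemma bilinear_extension_exists:
  assumes W: "vector_space sW"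
    and h1: "\<And>y. Vector_Spaces.linear sX sW (\<lambda>x. h x y)"
    and h2: "\<And>x. Vector_Spaces.linear sY sW (h x)"
  shows "\<exists>g. Vector_Spaces.linear sZ sW g \<and> (\<forall>x y. g (tz x y) = h x y)"
proof -
  obtain Bx where Bx: "X.independent Bx" "UNIV \<subseteq> X.span Bx"
    using X.basis_exists[of UNIV] by blast
  obtain By where By: "Y.independent By" "UNIV \<subseteq> Y.span By"
    using Y.basis_exists[of UNIV] by blast
  let ?pr = "\<lambda>(b, c). tz b c"
  interpret vector_space_pair sZ sW
    using W by (simp add: vector_space_pair_def Z.vector_space_axioms)
  define g where "g = construct (?pr ` (Bx \<times> By)) (\<lambda>z. case_prod h (inv_into (Bx \<times> By) ?pr z))"
  have lin: "Vector_Spaces.linear sZ sW g"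
    unfolding g_def by (rule linear_construct[OF tensor_basis_independent[OF Bx(1) By(1)]])
  have on_basis: "g (tz b c) = h b c" if "b \<in> Bx" "c \<in> By" for b c
  proof -
    have "tz b c \<in> ?pr ` (Bx \<times> By)"
      using that by force
    then have "g (tz b c) = case_prod h (inv_into (Bx \<times> By) ?pr (tz b c))"
      unfolding g_def by (rule construct_basis[OF tensor_basis_independent[OF Bx(1) By(1)]])
    also have "inv_into (Bx \<times> By) ?pr (tz b c) = (b, c)"
      using inv_into_f_f[OF tensor_basis_inj_on[OF Bx(1) By(1)], of "(b, c)"] that by simp
    finally show ?thesis by simp
  qed
  have on_left_basis: "g (tz x c) = h x c" if "c \<in> By" for x c
  proof -
    interpret pX: vector_space_pair sX sW
      using W by (simp add: vector_space_pair_def X.vector_space_axioms)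
    have "x \<in> X.span Bx" using Bx by auto
    then show ?thesis
      by (rule pX.linear_eq_on[OF lin_comp[OF linear_tz_left lin] h1]) (use on_basis that in auto)
  qed
  have "g (tz x y) = h x y" for x y
  proof -
    interpret pY: vector_space_pair sY sW
      using W by (simp add: vector_space_pair_def Y.vector_space_axioms)
    have "y \<in> Y.span By" using By by auto
    then show ?thesis
      by (rule pY.linear_eq_on[OF lin_comp[OF linear_tz_right lin] h2]) (use on_left_basis in auto)
  qed
  with lin show ?thesis by blast
qed

lemma tlift:
  assumes "vector_space sW"
    and "\<And>y. Vector_Spaces.linear sX sW (\<lambda>x. h x y)" and "\<And>x. Vector_Spaces.linear sY sW (h x)"
  shows "Vector_Spaces.linear sZ sW (tlift sZ sW tz h)" and "tlift sZ sW tz h (tz x y) = h x y"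
proof -
  have "\<exists>!g. Vector_Spaces.linear sZ sW g \<and> (\<forall>x y. g (tz x y) = h x y)"
    using bilinear_extension_exists[OF assms] linear_eq_on_tensors by metis
  then have "Vector_Spaces.linear sZ sW (tlift sZ sW tz h) \<and> (\<forall>x y. tlift sZ sW tz h (tz x y) = h x y)"
    unfolding tlift_def by (rule theI')
  then show "Vector_Spaces.linear sZ sW (tlift sZ sW tz h)" and "tlift sZ sW tz h (tz x y) = h x y"
    by auto
qed

lemma tensor_repr:
  assumes B: "X.independent B" "X.span B = UNIV"
  shows "\<exists>F g. finite F \<and> F \<subseteq> B \<and> z = (\<Sum>b\<in>F. tz b (g b))"
proof -
  have "z \<in> Z.span {tz x y | x y. True}"
    using span_tensors by simp
  then show ?thesis
  proof (induction rule: Z.span_induct_alt)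
    case base
    show ?case by (rule exI[of _ "{}"]) auto
  next
    case (step c x y)
    from step(1) obtain x0 y0 where x: "x = tz x0 y0" by auto
    from step(2) obtain F g where F: "finite F" "F \<subseteq> B" "y = (\<Sum>b\<in>F. tz b (g b))" by blast
    have "x0 \<in> X.span B" using B by auto
    then obtain t r where t: "finite t" "t \<subseteq> B" "x0 = (\<Sum>a\<in>t. sX (r a) a)"
      unfolding X.span_explicit by blast
    have tz_0: "tz b 0 = 0" for b
      using lin_zero[OF linear_tz_right] .
    have "(\<Sum>b\<in>F \<union> t. tz b (if b \<in> F then g b else 0)) = y"
      by (subst sum.mono_neutral_cong_right[of "F \<union> t" F]) (use F t tz_0 in auto)
    moreover have "(\<Sum>b\<in>F \<union> t. tz b (if b \<in> t then sY (c * r b) y0 else 0)) = sZ c x"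
    proof -
      have "(\<Sum>b\<in>F \<union> t. tz b (if b \<in> t then sY (c * r b) y0 else 0)) = (\<Sum>b\<in>t. tz b (sY (c * r b) y0))"
        by (rule sum.mono_neutral_cong_right) (use F t tz_0 in auto)
      also have "\<dots> = sZ c (\<Sum>b\<in>t. sZ (r b) (tz b y0))"
        by (simp add: lin_scale[OF linear_tz_right] Z.scale_sum_right)
      also have "(\<Sum>b\<in>t. sZ (r b) (tz b y0)) = x"
        unfolding x t(3) by (simp add: lin_sum[OF linear_tz_left] lin_scale[OF linear_tz_left])
      finally show ?thesis .
    qed
    ultimately have "sZ c x + y = (\<Sum>b\<in>F \<union> t.
        tz b ((if b \<in> F then g b else 0) + (if b \<in> t then sY (c * r b) y0 else 0)))"
      by (simp add: lin_add[OF linear_tz_right] sum.distrib add.commute)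
    then show ?case
      using F t by (intro exI[of _ "F \<union> t"] exI[of _ "\<lambda>b. (if b \<in> F then g b else 0) +
        (if b \<in> t then sY (c * r b) y0 else 0)"]) auto
  qed
qed

end

section \<open>Algebras with non-degenerate product and their tensor square\<close>

locale tensor_algebra =
  fixes sA :: "'k::field \<Rightarrow> 'a::ab_group_add \<Rightarrow> 'a"
    and sT :: "'k \<Rightarrow> 't::ab_group_add \<Rightarrow> 't"
    and sU :: "'k \<Rightarrow> 'u::ab_group_add \<Rightarrow> 'u"
    and m :: "'a \<Rightarrow> 'a \<Rightarrow> 'a" (infixl "\<cdot>" 70)
    and tp :: "'a \<Rightarrow> 'a \<Rightarrow> 't" (infix "\<otimes>" 65)
    and tq :: "'a \<Rightarrow> 't \<Rightarrow> 'u"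
  assumes linear_mult_left: "\<And>b. Vector_Spaces.linear sA sA (\<lambda>a. a \<cdot> b)"
    and linear_mult_right: "\<And>a. Vector_Spaces.linear sA sA (m a)"
    and m_assoc: "\<And>a b c. (a \<cdot> b) \<cdot> c = a \<cdot> (b \<cdot> c)"
    and nondegenerate_left: "\<And>a. (\<And>b. a \<cdot> b = 0) \<Longrightarrow> a = 0"
    and nondegenerate_right: "\<And>a. (\<And>b. b \<cdot> a = 0) \<Longrightarrow> a = 0"
    and tensor_AA: "is_tensor sA sA sT tp"
    and tensor_AAA: "is_tensor sA sT sU tq"
begin

sublocale AA: tensor_product sA sA sT tp
  by (rule tensor_product.intro[OF tensor_AA])

sublocale AAA: tensor_product sA sT sU tq
  by (rule tensor_product.intro[OF tensor_AAA])

lemma vs_A: "vector_space sA" and vs_T: "vector_space sT" and vs_U: "vector_space sU"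
  by (fact AA.X.vector_space_axioms AA.Z.vector_space_axioms AAA.Z.vector_space_axioms)+

lemma tlift_AA:
  assumes "vector_space sW"
    and "\<And>y. Vector_Spaces.linear sA sW (\<lambda>x. h x y)" and "\<And>x. Vector_Spaces.linear sA sW (h x)"
  shows "Vector_Spaces.linear sT sW (tlift sT sW tp h)" and "tlift sT sW tp h (x \<otimes> y) = h x y"
  by (fact AA.tlift[OF assms])+

lemma tlift_AAA:
  assumes "vector_space sW"
    and "\<And>y. Vector_Spaces.linear sA sW (\<lambda>x. h x y)" and "\<And>x. Vector_Spaces.linear sT sW (h x)"
  shows "Vector_Spaces.linear sU sW (tlift sU sW tq h)" and "tlift sU sW tq h (tq x y) = h x y"
  by (fact AAA.tlift[OF assms])+

lemma tensor_ext:
  assumes "Vector_Spaces.linear sT sW g1" and "Vector_Spaces.linear sT sW g2"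
    and "\<And>x y. g1 (x \<otimes> y) = g2 (x \<otimes> y)"
  shows "g1 z = g2 z"
  using AA.linear_eq_on_tensors[OF assms] by simp

lemma tensor_ext2:
  assumes "\<And>y. Vector_Spaces.linear sT sW (\<lambda>x. F x y)" and "\<And>y. Vector_Spaces.linear sT sW (\<lambda>x. G x y)"
    and "\<And>x. Vector_Spaces.linear sT sW (F x)" and "\<And>x. Vector_Spaces.linear sT sW (G x)"
    and "\<And>a b c d. F (a \<otimes> b) (c \<otimes> d) = G (a \<otimes> b) (c \<otimes> d)"
  shows "F x y = G x y"
proof -
  have "F (a \<otimes> b) y = G (a \<otimes> b) y" for a b
    by (rule tensor_ext[OF assms(3,4,5)])
  then show ?thesis
    by (rule tensor_ext[OF assms(1,2)])
qed

lemma linear_param: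
  assumes "vector_space sV" "vector_space sW"
    and K: "\<And>a. Vector_Spaces.linear sT sW (K a)"
    and K_tensor: "\<And>c d. Vector_Spaces.linear sV sW (\<lambda>a. K a (c \<otimes> d))"
  shows "Vector_Spaces.linear sV sW (\<lambda>a. K a y)"
proof (rule linI[OF assms(1,2)])
  show "K (a + a') y = K a y + K a' y" for a a'
    by (rule tensor_ext[OF K lin_plus[OF K K]]) (rule lin_add[OF K_tensor])
  show "K (sV c a) y = sW c (K a y)" for c a
    by (rule tensor_ext[OF K lin_scale_right[OF K]]) (rule lin_scale[OF K_tensor])
qed

lemma linear_tp_comp_left:
  "Vector_Spaces.linear sA sA f \<Longrightarrow> Vector_Spaces.linear sA sT (\<lambda>x. f x \<otimes> y)"
  by (rule lin_comp[OF _ AA.linear_tz_left])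

lemma linear_tp_comp_right:
  "Vector_Spaces.linear sA sA g \<Longrightarrow> Vector_Spaces.linear sA sT (\<lambda>y. x \<otimes> g y)"
  by (rule lin_comp[OF _ AA.linear_tz_right])

lemma linear_ident_T: "Vector_Spaces.linear sT sT (\<lambda>x. x)"
  by (rule vector_space.linear_ident[OF vs_T])

abbreviation tmult_by :: "'a \<Rightarrow> 'a \<Rightarrow> 't \<Rightarrow> 't" where
  "tmult_by a b \<equiv> tlift sT sT tp (\<lambda>c d. (a \<cdot> c) \<otimes> (b \<cdot> d))"

abbreviation tmult :: "'t \<Rightarrow> 't \<Rightarrow> 't" (infixl "\<star>" 60) where
  "x \<star> y \<equiv> tmul sT tp m x y"

abbreviation "left_1b \<equiv> mul_1b sT tp m"
abbreviation "right_a1 \<equiv> mul_a1 sT tp m"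
abbreviation "left_c1 \<equiv> lmul_c1 sT tp m"
abbreviation "right_1c \<equiv> rmul_1c sT tp m"
abbreviation "\<sigma> \<equiv> tflip sT tp"
abbreviation "\<mu> \<equiv> tlift sT sA tp m"

lemma linear_tmult_by: "Vector_Spaces.linear sT sT (tmult_by a b)"
  and tmult_by_tensor: "tmult_by a b (c \<otimes> d) = (a \<cdot> c) \<otimes> (b \<cdot> d)"
  by (rule tlift_AA[OF vs_T linear_tp_comp_left[OF linear_mult_right]
        linear_tp_comp_right[OF linear_mult_right]])+

lemma linear_tmult_by_param1: "Vector_Spaces.linear sA sT (\<lambda>a. tmult_by a b y)"
  by (rule linear_param[OF vs_A vs_T linear_tmult_by])
    (simp add: tmult_by_tensor linear_tp_comp_left[OF linear_mult_left])

lemma linear_tmult_by_param2: "Vector_Spaces.linear sA sT (\<lambda>b. tmult_by a b y)"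
  by (rule linear_param[OF vs_A vs_T linear_tmult_by])
    (simp add: tmult_by_tensor linear_tp_comp_right[OF linear_mult_left])

lemma linear_tmult_left: "Vector_Spaces.linear sT sT (\<lambda>x. x \<star> y)"
  and tensor_tmult: "(a \<otimes> b) \<star> y = tmult_by a b y"
  unfolding tmul_def
  by (rule tlift_AA[OF vs_T linear_tmult_by_param1 linear_tmult_by_param2])+

lemma tmult_tensor: "(a \<otimes> b) \<star> (c \<otimes> d) = (a \<cdot> c) \<otimes> (b \<cdot> d)"
  by (simp add: tensor_tmult tmult_by_tensor)

lemma linear_tmult_right: "Vector_Spaces.linear sT sT (\<lambda>y. x \<star> y)"
  by (rule linear_param[OF vs_T vs_T linear_tmult_left]) (simp add: tensor_tmult linear_tmult_by)

lemma linear_left_1b: "Vector_Spaces.linear sT sT (left_1b b)"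
  and left_1b_tensor: "left_1b b (c \<otimes> d) = c \<otimes> (b \<cdot> d)"
  unfolding mul_1b_def
  by (rule tlift_AA[OF vs_T AA.linear_tz_left linear_tp_comp_right[OF linear_mult_right]])+

lemma linear_right_a1: "Vector_Spaces.linear sT sT (right_a1 a)"
  and right_a1_tensor: "right_a1 a (c \<otimes> d) = (c \<cdot> a) \<otimes> d"
  unfolding mul_a1_def
  by (rule tlift_AA[OF vs_T linear_tp_comp_left[OF linear_mult_left] AA.linear_tz_right])+

lemma linear_left_c1: "Vector_Spaces.linear sT sT (left_c1 a)"
  and left_c1_tensor: "left_c1 a (c \<otimes> d) = (a \<cdot> c) \<otimes> d"
  unfolding lmul_c1_def
  by (rule tlift_AA[OF vs_T linear_tp_comp_left[OF linear_mult_right] AA.linear_tz_right])+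

lemma linear_right_1c: "Vector_Spaces.linear sT sT (right_1c a)"
  and right_1c_tensor: "right_1c a (c \<otimes> d) = c \<otimes> (d \<cdot> a)"
  unfolding rmul_1c_def
  by (rule tlift_AA[OF vs_T AA.linear_tz_left linear_tp_comp_right[OF linear_mult_left]])+

lemma linear_flip: "Vector_Spaces.linear sT sT \<sigma>"
  and flip_tensor: "\<sigma> (c \<otimes> d) = d \<otimes> c"
  unfolding tflip_def by (rule tlift_AA[OF vs_T AA.linear_tz_right AA.linear_tz_left])+

lemma linear_mu: "Vector_Spaces.linear sT sA \<mu>"
  and mu_tensor: "\<mu> (c \<otimes> d) = c \<cdot> d"
  by (rule tlift_AA[OF vs_A linear_mult_left linear_mult_right])+

lemmas tensor_simps =
  left_1b_tensor right_a1_tensor left_c1_tensor right_1c_tensor flip_tensor mu_tensor tmult_tensor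

lemma linear_left_1b_param: "Vector_Spaces.linear sA sT (\<lambda>b. left_1b b x)"
  by (rule linear_param[OF vs_A vs_T linear_left_1b])
    (simp add: left_1b_tensor linear_tp_comp_right[OF linear_mult_left])

lemma linear_right_a1_param: "Vector_Spaces.linear sA sT (\<lambda>a. right_a1 a x)"
  by (rule linear_param[OF vs_A vs_T linear_right_a1])
    (simp add: right_a1_tensor linear_tp_comp_left[OF linear_mult_right])

lemma linear_left_c1_param: "Vector_Spaces.linear sA sT (\<lambda>a. left_c1 a x)"
  by (rule linear_param[OF vs_A vs_T linear_left_c1])
    (simp add: left_c1_tensor linear_tp_comp_left[OF linear_mult_left])

lemma tmult_assoc: "(x \<star> y) \<star> z = x \<star> (y \<star> z)"
proof -
  have "(x \<star> y) \<star> (a \<otimes> b) = x \<star> (y \<star> (a \<otimes> b))" for a b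
    by (rule tensor_ext2[where F = "\<lambda>x y. (x \<star> y) \<star> (a \<otimes> b)" and G = "\<lambda>x y. x \<star> (y \<star> (a \<otimes> b))",
          OF lin_comp[OF linear_tmult_left linear_tmult_left] linear_tmult_left
          lin_comp[OF linear_tmult_right linear_tmult_left] lin_comp[OF linear_tmult_left linear_tmult_right]])
      (simp add: tmult_tensor m_assoc)
  then show ?thesis
    by (rule tensor_ext[OF linear_tmult_right lin_comp[OF linear_tmult_right linear_tmult_right]])
qed

lemma left_c1_tmult: "left_c1 c x \<star> y = left_c1 c (x \<star> y)"
  by (rule tensor_ext2[OF lin_comp[OF linear_left_c1 linear_tmult_left] lin_comp[OF linear_tmult_left linear_left_c1]
        linear_tmult_right lin_comp[OF linear_tmult_right linear_left_c1]])
    (simp add: tensor_simps m_assoc)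

lemma right_a1_tmult: "right_a1 a x \<star> y = x \<star> left_c1 a y"
  by (rule tensor_ext2[OF lin_comp[OF linear_right_a1 linear_tmult_left] linear_tmult_left
        linear_tmult_right lin_comp[OF linear_left_c1 linear_tmult_right]])
    (simp add: tensor_simps m_assoc)

lemma right_1c_tmult: "right_1c c x \<star> y = x \<star> left_1b c y"
  by (rule tensor_ext2[OF lin_comp[OF linear_right_1c linear_tmult_left] linear_tmult_left
        linear_tmult_right lin_comp[OF linear_left_1b linear_tmult_right]])
    (simp add: tensor_simps m_assoc)

lemma left_1b_left_c1: "left_1b b (left_c1 a z) = (a \<otimes> b) \<star> z"
  by (rule tensor_ext[OF lin_comp[OF linear_left_c1 linear_left_1b] linear_tmult_right])
    (simp add: tensor_simps)

lemma right_1c_right_a1: "right_1c c (right_a1 a x) = x \<star> (a \<otimes> c)"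
  by (rule tensor_ext[OF lin_comp[OF linear_right_a1 linear_right_1c] linear_tmult_left])
    (simp add: tensor_simps)

lemma flip_tmult: "\<sigma> (x \<star> y) = \<sigma> x \<star> \<sigma> y"
  by (rule tensor_ext2[OF lin_comp[OF linear_tmult_left linear_flip] lin_comp[OF linear_flip linear_tmult_left]
        lin_comp[OF linear_tmult_right linear_flip] lin_comp[OF linear_flip linear_tmult_right]])
    (simp add: tensor_simps)

lemma flip_flip: "\<sigma> (\<sigma> x) = x"
  by (rule tensor_ext[OF lin_comp[OF linear_flip linear_flip] linear_ident_T]) (simp add: tensor_simps)

lemma flip_left_1b: "\<sigma> (left_1b b x) = left_c1 b (\<sigma> x)"
  by (rule tensor_ext[OF lin_comp[OF linear_left_1b linear_flip] lin_comp[OF linear_flip linear_left_c1]])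
    (simp add: tensor_simps)

lemma flip_right_a1: "\<sigma> (right_a1 a x) = right_1c a (\<sigma> x)"
  by (rule tensor_ext[OF lin_comp[OF linear_right_a1 linear_flip] lin_comp[OF linear_flip linear_right_1c]])
    (simp add: tensor_simps)

lemma left_c1_left_1b: "left_c1 c (left_1b b x) = left_1b b (left_c1 c x)"
  by (rule tensor_ext[OF lin_comp[OF linear_left_1b linear_left_c1] lin_comp[OF linear_left_c1 linear_left_1b]])
    (simp add: tensor_simps)

lemma right_1c_right_a1_commute: "right_1c c (right_a1 a x) = right_a1 a (right_1c c x)"
  by (rule tensor_ext[OF lin_comp[OF linear_right_a1 linear_right_1c] lin_comp[OF linear_right_1c linear_right_a1]])
    (simp add: tensor_simps)

lemma right_a1_right_a1: "right_a1 b (right_a1 a x) = right_a1 (a \<cdot> b) x"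
  by (rule tensor_ext[OF lin_comp[OF linear_right_a1 linear_right_a1] linear_right_a1])
    (simp add: tensor_simps m_assoc)

lemma mu_left_c1: "\<mu> (left_c1 c x) = c \<cdot> \<mu> x"
  by (rule tensor_ext[OF lin_comp[OF linear_left_c1 linear_mu] lin_comp[OF linear_mu linear_mult_right]])
    (simp add: tensor_simps m_assoc)

lemma mu_right_1c: "\<mu> (right_1c c x) = \<mu> x \<cdot> c"
  by (rule tensor_ext[OF lin_comp[OF linear_right_1c linear_mu] lin_comp[OF linear_mu linear_mult_left]])
    (simp add: tensor_simps m_assoc)

lemma copL_copL: "copL sT tp (copL sT tp D) = D"
  by (intro ext) (simp add: copL_def flip_flip)

lemma tmult_flip_right: "x \<star> \<sigma> y = \<sigma> (\<sigma> x \<star> y)"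
  by (simp add: flip_tmult flip_flip)

lemma tmult_flip_left: "\<sigma> y \<star> x = \<sigma> (y \<star> \<sigma> x)"
  by (simp add: flip_tmult flip_flip)

lemma linear_assoc_l: "Vector_Spaces.linear sT sU (\<lambda>z. assoc_l sT sU tp tq z b)"
  and assoc_l_tensor: "assoc_l sT sU tp tq (u \<otimes> v) b = tq u (v \<otimes> b)"
  unfolding assoc_l_def
  by (rule tlift_AA[OF vs_U AAA.linear_tz_left lin_comp[OF AA.linear_tz_left AAA.linear_tz_right]])+

lemma
  assumes F: "Vector_Spaces.linear sT sA F"
  shows linear_idF: "Vector_Spaces.linear sU sT (idF sT sU tp tq F)"
    and idF_tensor: "idF sT sU tp tq F (tq x w) = x \<otimes> F w"
  unfolding idF_def by (rule tlift_AAA[OF vs_T AA.linear_tz_left lin_comp[OF F AA.linear_tz_right]])+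

lemma
  assumes G: "Vector_Spaces.linear sT sA G"
  shows linear_Fid: "Vector_Spaces.linear sU sT (Fid sT sU tp tq G)"
    and Fid_tensor: "Fid sT sU tp tq G (tq x (y \<otimes> z)) = G (x \<otimes> y) \<otimes> z"
proof -
  let ?inner = "\<lambda>x. tlift sT sT tp (\<lambda>y z. G (x \<otimes> y) \<otimes> z)"
  have inner: "Vector_Spaces.linear sT sT (?inner x)" "?inner x (y \<otimes> z) = G (x \<otimes> y) \<otimes> z" for x y z
    by (rule tlift_AA[OF vs_T lin_comp[OF lin_comp[OF AA.linear_tz_right G] AA.linear_tz_left]
          AA.linear_tz_right])+
  have "Vector_Spaces.linear sA sT (\<lambda>x. ?inner x w)" for w
    by (rule linear_param[OF vs_A vs_T inner(1)])
      (simp add: inner(2) lin_comp[OF lin_comp[OF AA.linear_tz_left G] AA.linear_tz_left])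
  from tlift_AAA[OF vs_T this inner(1)] show "Vector_Spaces.linear sU sT (Fid sT sU tp tq G)"
    and "Fid sT sU tp tq G (tq x (y \<otimes> z)) = G (x \<otimes> y) \<otimes> z"
    unfolding Fid_def by (simp_all add: inner(2))
qed

lemma
  assumes \<omega>: "Vector_Spaces.linear sA (*) \<omega>"
  shows linear_epsI: "Vector_Spaces.linear sT sA (epsI sA sT tp \<omega>)"
    and epsI_tensor: "epsI sA sT tp \<omega> (u \<otimes> v) = sA (\<omega> u) v"
    and linear_Ieps: "Vector_Spaces.linear sT sA (Ieps sA sT tp \<omega>)"
    and Ieps_tensor: "Ieps sA sT tp \<omega> (u \<otimes> v) = sA (\<omega> v) u"
proof -
  have scale_linear: "Vector_Spaces.linear sA sA (\<lambda>u. sA (\<omega> v) u)" for v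
    by (rule linI[OF vs_A vs_A]) (simp_all add: AA.X.scale_right_distrib AA.X.scale_left_commute)
  have scalar_linear: "Vector_Spaces.linear sA sA (\<lambda>v. sA (\<omega> v) u)" for u
    by (rule linI[OF vs_A vs_A]) (simp_all add: lin_add[OF \<omega>] lin_scale[OF \<omega>] AA.X.scale_left_distrib)
  show "Vector_Spaces.linear sT sA (epsI sA sT tp \<omega>)" and "epsI sA sT tp \<omega> (u \<otimes> v) = sA (\<omega> u) v"
    unfolding epsI_def by (rule tlift_AA[OF vs_A scalar_linear scale_linear])+
  show "Vector_Spaces.linear sT sA (Ieps sA sT tp \<omega>)" and "Ieps sA sT tp \<omega> (u \<otimes> v) = sA (\<omega> v) u"
    unfolding Ieps_def by (rule tlift_AA[OF vs_A scale_linear scalar_linear])+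
qed

text \<open>Write \<open>y = \<Sum>b\<in>F. b \<otimes> g b\<close> over a basis; slicing \<open>y \<star> (a \<otimes> d)\<close> with a functional
  \<open>\<omega>\<close> that is \<open>1\<close> on a nonzero \<open>g b\<^sub>0 \<cdot> d\<close> gives a vanishing combination of basis vectors
  with a nonzero coefficient.\<close>

lemma tmult_eq_zero_right:
  assumes zero: "\<And>a b. y \<star> (a \<otimes> b) = 0"
  shows "y = 0"
proof -
  obtain B where "AA.X.independent B" "UNIV \<subseteq> AA.X.span B"
    using AA.X.basis_exists[of UNIV] by blast
  then have B: "AA.X.independent B" "AA.X.span B = UNIV"
    by auto
  obtain F g where F: "finite F" "F \<subseteq> B" "y = (\<Sum>b\<in>F. b \<otimes> g b)"
    using AA.tensor_repr[OF B] by blast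
  have coeff_zero: "c b = 0" if "(\<Sum>b\<in>F. sA (c b) b) = 0" "b \<in> F" for c b
    using B(1) F(1,2) that unfolding AA.X.independent_explicit_finite_subsets by blast
  have "g b\<^sub>0 = 0" if "b\<^sub>0 \<in> F" for b\<^sub>0
  proof (rule nondegenerate_left)
    fix d
    show "g b\<^sub>0 \<cdot> d = 0"
    proof (rule ccontr)
      assume "g b\<^sub>0 \<cdot> d \<noteq> 0"
      then obtain \<omega> where \<omega>: "Vector_Spaces.linear sA (*) \<omega>" "\<omega> (g b\<^sub>0 \<cdot> d) = 1"
        using linear_functional_one[OF vs_A] by blast
      have "(\<Sum>b\<in>F. sA (\<omega> (g b \<cdot> d)) b) \<cdot> a = 0" for a
      proof -
        have "0 = Ieps sA sT tp \<omega> (y \<star> (a \<otimes> d))"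
          using zero lin_zero[OF linear_Ieps[OF \<omega>(1)]] by simp
        also have "y \<star> (a \<otimes> d) = (\<Sum>b\<in>F. (b \<cdot> a) \<otimes> (g b \<cdot> d))"
          unfolding F(3) by (simp add: lin_sum[OF linear_tmult_left] tmult_tensor)
        also have "Ieps sA sT tp \<omega> \<dots> = (\<Sum>b\<in>F. sA (\<omega> (g b \<cdot> d)) b) \<cdot> a"
          by (simp add: lin_sum[OF linear_Ieps[OF \<omega>(1)]] Ieps_tensor[OF \<omega>(1)]
              lin_sum[OF linear_mult_left] lin_scale[OF linear_mult_left])
        finally show ?thesis by simp
      qed
      then have "(\<Sum>b\<in>F. sA (\<omega> (g b \<cdot> d)) b) = 0"
        by (rule nondegenerate_left)
      then have "\<omega> (g b\<^sub>0 \<cdot> d) = 0"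
        using coeff_zero[of "\<lambda>b. \<omega> (g b \<cdot> d)"] \<open>b\<^sub>0 \<in> F\<close> by blast
      with \<omega>(2) show False by simp
    qed
  qed
  then show ?thesis
    unfolding F(3) by (simp add: lin_zero[OF AA.linear_tz_right])
qed

text \<open>The left-hand version is the right-hand one for the opposite algebra.\<close>

lemma tmult_eq_zero_left:
  assumes zero: "\<And>a b. (a \<otimes> b) \<star> y = 0"
  shows "y = 0"
proof -
  interpret op: tensor_algebra sA sT sU "\<lambda>a b. b \<cdot> a" tp tq
  proof (rule tensor_algebra.intro)
    show "Vector_Spaces.linear sA sA (\<lambda>a. b \<cdot> a)" for b
      by (rule linear_mult_right)
    show "Vector_Spaces.linear sA sA (\<lambda>a. a \<cdot> b)" for b
      by (rule linear_mult_left)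
    show "c \<cdot> (b \<cdot> a) = (c \<cdot> b) \<cdot> a" for a b c
      by (simp add: m_assoc)
    show "a = 0" if "\<And>b. b \<cdot> a = 0" for a
      using that by (rule nondegenerate_right)
    show "a = 0" if "\<And>b. a \<cdot> b = 0" for a
      using that by (rule nondegenerate_left)
  qed (fact tensor_AA tensor_AAA)+
  have op_tmult: "op.tmult x z = z \<star> x" for x z
    by (rule tensor_ext2[OF op.linear_tmult_left linear_tmult_right op.linear_tmult_right linear_tmult_left])
      (simp add: tmult_tensor op.tmult_tensor)
  show ?thesis
    by (rule op.tmult_eq_zero_right) (simp add: op_tmult zero)
qed

lemma eq_by_tmult_right: "(\<And>x. y \<star> x = y' \<star> x) \<Longrightarrow> y = y'"
  using tmult_eq_zero_right[of "y - y'"] by (simp add: lin_diff[OF linear_tmult_left])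

lemma eq_by_tmult_left: "(\<And>x. x \<star> y = x \<star> y') \<Longrightarrow> y = y'"
  using tmult_eq_zero_left[of "y - y'"] by (simp add: lin_diff[OF linear_tmult_right])

lemma eq_by_mult_right: "(\<And>x. y \<cdot> x = y' \<cdot> x) \<Longrightarrow> y = y'"
  using nondegenerate_left[of "y - y'"] by (simp add: lin_diff[OF linear_mult_left])

lemma eq_by_mult_left: "(\<And>x. x \<cdot> y = x \<cdot> y') \<Longrightarrow> y = y'"
  using nondegenerate_right[of "y - y'"] by (simp add: lin_diff[OF linear_mult_right])


lemma eq_by_left_c1:
  assumes "\<And>y. left_c1 y v = left_c1 y v'"
  shows "v = v'"
proof (rule eq_by_tmult_left)
  show "x \<star> v = x \<star> v'" for x
    by (rule tensor_ext[OF linear_tmult_left linear_tmult_left]) (simp add: left_1b_left_c1[symmetric] assms)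
qed

lemma linear_by_tmult_right:
  assumes "vector_space sV"
    and F: "\<And>a x. F a \<star> x = G a x" and G: "\<And>x. Vector_Spaces.linear sV sT (\<lambda>a. G a x)"
  shows "Vector_Spaces.linear sV sT F"
proof (rule linI[OF assms(1) vs_T])
  show "F (a + a') = F a + F a'" for a a'
    by (rule eq_by_tmult_right) (simp add: F lin_add[OF linear_tmult_left] lin_add[OF G])
  show "F (sV c a) = sT c (F a)" for c a
    by (rule eq_by_tmult_right) (simp add: F lin_scale[OF linear_tmult_left] lin_scale[OF G])
qed

lemma linear_by_tmult_left:
  assumes "vector_space sV"
    and F: "\<And>a x. x \<star> F a = G a x" and G: "\<And>x. Vector_Spaces.linear sV sT (\<lambda>a. G a x)"
  shows "Vector_Spaces.linear sV sT F"
proof (rule linI[OF assms(1) vs_T])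
  show "F (a + a') = F a + F a'" for a a'
    by (rule eq_by_tmult_left) (simp add: F lin_add[OF linear_tmult_right] lin_add[OF G])
  show "F (sV c a) = sT c (F a)" for c a
    by (rule eq_by_tmult_left) (simp add: F lin_scale[OF linear_tmult_right] lin_scale[OF G])
qed

end


section \<open>Generalized multiplier Hopf coquasigroups\<close>

locale multiplier_hopf_coquasigroup = tensor_algebra sA sT sU m tp tq
  for sA :: "'k::field \<Rightarrow> 'a::ab_group_add \<Rightarrow> 'a"
    and sT :: "'k \<Rightarrow> 't::ab_group_add \<Rightarrow> 't"
    and sU :: "'k \<Rightarrow> 'u::ab_group_add \<Rightarrow> 'u"
    and m :: "'a \<Rightarrow> 'a \<Rightarrow> 'a" (infixl "\<cdot>" 70)
    and tp :: "'a \<Rightarrow> 'a \<Rightarrow> 't" (infix "\<otimes>" 65)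
    and tq :: "'a \<Rightarrow> 't \<Rightarrow> 'u" +
  fixes DL DR :: "'a \<Rightarrow> 't \<Rightarrow> 't"
    and e :: "'a \<Rightarrow> 'k"
  assumes linear_DL: "\<And>a. Vector_Spaces.linear sT sT (DL a)"
    and linear_DR: "\<And>a. Vector_Spaces.linear sT sT (DR a)"
    and DR_tmult: "\<And>a x y. DR a x \<star> y = x \<star> DL a y"
    and linear_DL_param: "\<And>x. Vector_Spaces.linear sA sT (\<lambda>a. DL a x)"
    and linear_DR_param: "\<And>x. Vector_Spaces.linear sA sT (\<lambda>a. DR a x)"
    and DL_mult_comp: "\<And>a b. DL (a \<cdot> b) = DL a \<circ> DL b"
    and DR_mult_comp: "\<And>a b. DR (a \<cdot> b) = DR b \<circ> DR a"
    and Delta_1b_exists: "\<And>a b. \<exists>y. \<forall>x. y \<star> x = DL a (left_1b b x)"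
    and a1_Delta_exists: "\<And>a b. \<exists>y. \<forall>x. x \<star> y = DR b (right_a1 a x)"
    and linear_eps: "Vector_Spaces.linear sA (*) e"
    and eps_id_T1_tensor: "\<And>a b. epsI sA sT tp e (gT1 sT tp m DL (a \<otimes> b)) = a \<cdot> b"
    and id_eps_T2_tensor: "\<And>a b. Ieps sA sT tp e (gT2 sT tp m DR (a \<otimes> b)) = a \<cdot> b"
    and bij_T1: "bij (gT1 sT tp m DL)"
    and bij_T2: "bij (gT2 sT tp m DR)"
    and coquasigroup_left_axiom: "\<And>c a b. left_c1 c (inv (gT1 sT tp m DL) (a \<otimes> b)) =
      idF sT sU tp tq (epsI sA sT tp e \<circ> inv (gT1 sT tp m DL)) (assoc_l sT sU tp tq (gT2 sT tp m DR (c \<otimes> a)) b)"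
    and coquasigroup_right_axiom: "\<And>c a b. right_1c c (inv (gT2 sT tp m DR) (a \<otimes> b)) =
      Fid sT sU tp tq (Ieps sA sT tp e \<circ> inv (gT2 sT tp m DR)) (tq a (gT1 sT tp m DL (b \<otimes> c)))"

lemma gmhc_imp_multiplier_hopf_coquasigroup:
  assumes "gmhc sA sT sU m tp tq DL DR e"
  shows "multiplier_hopf_coquasigroup sA sT sU m tp tq DL DR e"
  using assms
  unfolding gmhc_def multiplier_hopf_coquasigroup_def multiplier_hopf_coquasigroup_axioms_def
    tensor_algebra_def all_conj_distrib
  by (elim conjE) (intro conjI; assumption)

context multiplier_hopf_coquasigroup
begin

abbreviation "T1 \<equiv> gT1 sT tp m DL"
abbreviation "T2 \<equiv> gT2 sT tp m DR"
abbreviation "T1_inv \<equiv> inv T1"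
abbreviation "T2_inv \<equiv> inv T2"
abbreviation "eps_id \<equiv> epsI sA sT tp e"
abbreviation "id_eps \<equiv> Ieps sA sT tp e"
abbreviation "S \<equiv> gS sA sT tp m DL e"

lemma DL_mult: "DL (a \<cdot> b) x = DL a (DL b x)"
  and DR_mult: "DR (a \<cdot> b) x = DR b (DR a x)"
  by (simp_all add: DL_mult_comp DR_mult_comp)

lemma DR_tmult_right: "DR a (x \<star> y) = x \<star> DR a y"
  by (rule eq_by_tmult_right) (simp add: DR_tmult tmult_assoc)

lemma DL_tmult_left: "DL a (x \<star> y) = DL a x \<star> y"
  by (rule eq_by_tmult_left) (simp add: DR_tmult[symmetric] tmult_assoc[symmetric])

lemmas linear_eps_id = linear_epsI[OF linear_eps]
  and eps_id_tensor = epsI_tensor[OF linear_eps]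
  and linear_id_eps = linear_Ieps[OF linear_eps]
  and id_eps_tensor = Ieps_tensor[OF linear_eps]

definition Delta_1b :: "'a \<Rightarrow> 'a \<Rightarrow> 't" where
  "Delta_1b a b = (THE y. \<forall>x. y \<star> x = DL a (left_1b b x))"

definition a1_Delta :: "'a \<Rightarrow> 'a \<Rightarrow> 't" where
  "a1_Delta a b = (THE y. \<forall>x. x \<star> y = DR b (right_a1 a x))"

lemma Delta_1b_tmult: "Delta_1b a b \<star> x = DL a (left_1b b x)"
proof -
  have "\<exists>!y. \<forall>x. y \<star> x = DL a (left_1b b x)"
    using Delta_1b_exists eq_by_tmult_right by metis
  from theI'[OF this] show ?thesis
    unfolding Delta_1b_def by blast
qed

lemma tmult_a1_Delta: "x \<star> a1_Delta a b = DR b (right_a1 a x)"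
proof -
  have "\<exists>!y. \<forall>x. x \<star> y = DR b (right_a1 a x)"
    using a1_Delta_exists eq_by_tmult_left by metis
  from theI'[OF this] show ?thesis
    unfolding a1_Delta_def by blast
qed

lemma linear_Delta_1b_left: "Vector_Spaces.linear sA sT (\<lambda>a. Delta_1b a b)"
  by (rule linear_by_tmult_right[OF vs_A]) (rule Delta_1b_tmult, rule linear_DL_param)

lemma linear_Delta_1b_right: "Vector_Spaces.linear sA sT (Delta_1b a)"
  by (rule linear_by_tmult_right[OF vs_A])
    (rule Delta_1b_tmult, rule lin_comp[OF linear_left_1b_param linear_DL])

lemma linear_a1_Delta_left: "Vector_Spaces.linear sA sT (\<lambda>a. a1_Delta a b)"
  by (rule linear_by_tmult_left[OF vs_A])
    (rule tmult_a1_Delta, rule lin_comp[OF linear_right_a1_param linear_DR])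

lemma linear_a1_Delta_right: "Vector_Spaces.linear sA sT (a1_Delta a)"
  by (rule linear_by_tmult_left[OF vs_A]) (rule tmult_a1_Delta, rule linear_DR_param)

lemma linear_T1: "Vector_Spaces.linear sT sT T1"
  and T1_tensor: "T1 (a \<otimes> b) = Delta_1b a b"
  unfolding gT1_def Delta_1b_def[symmetric]
  by (rule tlift_AA[OF vs_T linear_Delta_1b_left linear_Delta_1b_right])+

lemma linear_T2: "Vector_Spaces.linear sT sT T2"
  and T2_tensor: "T2 (a \<otimes> b) = a1_Delta a b"
  unfolding gT2_def a1_Delta_def[symmetric]
  by (rule tlift_AA[OF vs_T linear_a1_Delta_left linear_a1_Delta_right])+

lemma T1_tensor_tmult: "T1 (a \<otimes> b) \<star> x = DL a (left_1b b x)"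
  by (simp add: T1_tensor Delta_1b_tmult)

lemma tmult_T2_tensor: "x \<star> T2 (a \<otimes> b) = DR b (right_a1 a x)"
  by (simp add: T2_tensor tmult_a1_Delta)

lemma linear_T1_inv: "Vector_Spaces.linear sT sT T1_inv"
  and T1_T1_inv: "T1 (T1_inv z) = z"
  and T1_inv_T1: "T1_inv (T1 z) = z"
  using lin_inv[OF linear_T1 bij_T1] bij_T1 by (auto simp: bij_is_surj bij_is_inj surj_f_inv_f)

lemma linear_T2_inv: "Vector_Spaces.linear sT sT T2_inv"
  and T2_T2_inv: "T2 (T2_inv z) = z"
  and T2_inv_T2: "T2_inv (T2 z) = z"
  using lin_inv[OF linear_T2 bij_T2] bij_T2 by (auto simp: bij_is_surj bij_is_inj surj_f_inv_f)

lemma T1_inv_eqI: "T1 x = y \<Longrightarrow> T1_inv y = x"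
  using T1_inv_T1 by blast

lemma T2_inv_eqI: "T2 x = y \<Longrightarrow> T2_inv y = x"
  using T2_inv_T2 by blast

lemma eps_id_T1: "eps_id (T1 z) = \<mu> z"
  by (rule tensor_ext[OF lin_comp[OF linear_T1 linear_eps_id] linear_mu])
    (simp add: eps_id_T1_tensor mu_tensor)

lemma id_eps_T2: "id_eps (T2 z) = \<mu> z"
  by (rule tensor_ext[OF lin_comp[OF linear_T2 linear_id_eps] linear_mu])
    (simp add: id_eps_T2_tensor mu_tensor)

lemma mu_T1_inv: "\<mu> (T1_inv z) = eps_id z"
  using eps_id_T1[of "T1_inv z"] by (simp add: T1_T1_inv)

lemma mu_T2_inv: "\<mu> (T2_inv z) = id_eps z"
  using id_eps_T2[of "T2_inv z"] by (simp add: T2_T2_inv)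

lemma S_eq: "S a b = eps_id (T1_inv (a \<otimes> b))"
  by (simp add: gS_def)

lemma linear_S: "Vector_Spaces.linear sA sA (S a)"
  unfolding S_eq by (rule lin_comp[OF lin_comp[OF AA.linear_tz_right linear_T1_inv] linear_eps_id])

text \<open>\<open>rmul_S y a\<close> stands for \<open>y S(a)\<close>, see \<open>mult_S\<close>.\<close>

definition rmul_S :: "'a \<Rightarrow> 'a \<Rightarrow> 'a" where
  "rmul_S y a = id_eps (T2_inv (y \<otimes> a))"

definition id_S_mul :: "'a \<Rightarrow> 't \<Rightarrow> 't" where
  "id_S_mul b = tlift sT sT tp (\<lambda>u v. u \<otimes> S v b)"

definition rmul_S_id :: "'a \<Rightarrow> 't \<Rightarrow> 't" where
  "rmul_S_id a = tlift sT sT tp (\<lambda>u v. rmul_S a u \<otimes> v)"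

lemma linear_id_S_mul: "Vector_Spaces.linear sT sT (id_S_mul b)"
  and id_S_mul_tensor: "id_S_mul b (u \<otimes> v) = u \<otimes> S v b"
  unfolding id_S_mul_def S_eq
  by (rule tlift_AA[OF vs_T AA.linear_tz_left
        lin_comp[OF lin_comp[OF lin_comp[OF AA.linear_tz_left linear_T1_inv] linear_eps_id] AA.linear_tz_right]])+

lemma linear_rmul_S_id: "Vector_Spaces.linear sT sT (rmul_S_id a)"
  and rmul_S_id_tensor: "rmul_S_id a (u \<otimes> v) = rmul_S a u \<otimes> v"
  unfolding rmul_S_id_def rmul_S_def
  by (rule tlift_AA[OF vs_T
        lin_comp[OF lin_comp[OF lin_comp[OF AA.linear_tz_right linear_T2_inv] linear_id_eps] AA.linear_tz_left]
        AA.linear_tz_right])+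

lemma coquasigroup_left: "left_c1 c (T1_inv (a \<otimes> b)) = id_S_mul b (T2 (c \<otimes> a))"
proof -
  have "idF sT sU tp tq (eps_id \<circ> T1_inv) (assoc_l sT sU tp tq z b) = id_S_mul b z" for z
  proof (rule tensor_ext[OF lin_comp[OF linear_assoc_l linear_idF] linear_id_S_mul])
    show "Vector_Spaces.linear sT sA (eps_id \<circ> T1_inv)"
      using lin_comp[OF linear_T1_inv linear_eps_id] by (simp add: o_def)
    then show "idF sT sU tp tq (eps_id \<circ> T1_inv) (assoc_l sT sU tp tq (u \<otimes> v) b) = id_S_mul b (u \<otimes> v)"
      for u v
      by (simp add: assoc_l_tensor idF_tensor id_S_mul_tensor S_eq)
  qed
  then show ?thesis
    by (simp add: coquasigroup_left_axiom)
qed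

lemma coquasigroup_right: "right_1c c (T2_inv (a \<otimes> b)) = rmul_S_id a (T1 (b \<otimes> c))"
proof -
  have G: "Vector_Spaces.linear sT sA (id_eps \<circ> T2_inv)"
    using lin_comp[OF linear_T2_inv linear_id_eps] by (simp add: o_def)
  have "Fid sT sU tp tq (id_eps \<circ> T2_inv) (tq a z) = rmul_S_id a z" for z
    by (rule tensor_ext[OF lin_comp[OF AAA.linear_tz_right linear_Fid[OF G]] linear_rmul_S_id])
      (simp add: Fid_tensor[OF G] rmul_S_id_tensor rmul_S_def)
  then show ?thesis
    by (simp add: coquasigroup_right_axiom)
qed

lemma mu_id_S_mul_T2: "\<mu> (id_S_mul x (T2 z)) = id_eps z \<cdot> x"
proof (rule tensor_ext[OF lin_comp[OF lin_comp[OF linear_T2 linear_id_S_mul] linear_mu]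
      lin_comp[OF linear_id_eps linear_mult_left]])
  fix p q
  have "\<mu> (id_S_mul x (T2 (p \<otimes> q))) = \<mu> (left_c1 p (T1_inv (q \<otimes> x)))"
    by (simp add: coquasigroup_left)
  also have "\<dots> = p \<cdot> sA (e q) x"
    by (simp add: mu_left_c1 mu_T1_inv eps_id_tensor)
  also have "\<dots> = id_eps (p \<otimes> q) \<cdot> x"
    by (simp add: id_eps_tensor lin_scale[OF linear_mult_right] lin_scale[OF linear_mult_left])
  finally show "\<mu> (id_S_mul x (T2 (p \<otimes> q))) = id_eps (p \<otimes> q) \<cdot> x" .
qed

lemma mult_S: "y \<cdot> S a x = rmul_S y a \<cdot> x"
proof -
  have "y \<cdot> S a x = \<mu> (id_S_mul x (y \<otimes> a))"
    by (simp add: id_S_mul_tensor mu_tensor)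
  also have "\<dots> = rmul_S y a \<cdot> x"
    using mu_id_S_mul_T2[of x "T2_inv (y \<otimes> a)"] by (simp add: T2_T2_inv rmul_S_def)
  finally show ?thesis .
qed

lemma T1_left_c1: "T1 (left_c1 u y) = DL u (T1 y)"
proof (rule tensor_ext[OF lin_comp[OF linear_left_c1 linear_T1] lin_comp[OF linear_T1 linear_DL]])
  show "T1 (left_c1 u (p \<otimes> q)) = DL u (T1 (p \<otimes> q))" for p q
    by (rule eq_by_tmult_right) (simp add: left_c1_tensor T1_tensor_tmult DL_mult DL_tmult_left[symmetric])
qed

lemma T2_right_1c: "T2 (right_1c q w) = DR q (T2 w)"
proof (rule tensor_ext[OF lin_comp[OF linear_right_1c linear_T2] lin_comp[OF linear_T2 linear_DR]])
  show "T2 (right_1c q (u \<otimes> v)) = DR q (T2 (u \<otimes> v))" for u v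
    by (rule eq_by_tmult_left) (simp add: right_1c_tensor tmult_T2_tensor DR_mult DR_tmult_right[symmetric])
qed

lemma T2_left_c1: "T2 (left_c1 y z) = left_c1 y (T2 z)"
proof (rule tensor_ext[OF lin_comp[OF linear_left_c1 linear_T2] lin_comp[OF linear_T2 linear_left_c1]])
  show "T2 (left_c1 y (u \<otimes> v)) = left_c1 y (T2 (u \<otimes> v))" for u v
    by (rule eq_by_tmult_left) (simp add: left_c1_tensor tmult_T2_tensor right_a1_tmult[symmetric] right_a1_right_a1)
qed

lemma T2_inv_left_c1: "T2_inv (left_c1 y z) = left_c1 y (T2_inv z)"
  by (rule T2_inv_eqI) (simp add: T2_left_c1 T2_T2_inv)

lemma right_a1_T1: "right_a1 b (T1 (u \<otimes> v)) = DL u (b \<otimes> v)"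
  by (rule eq_by_tmult_right) (simp add: right_a1_tmult T1_tensor_tmult left_1b_left_c1 DL_tmult_left)

definition left_T1_inv :: "'a \<Rightarrow> 't \<Rightarrow> 't" where
  "left_T1_inv b = tlift sT sT tp (\<lambda>u v. left_c1 u (T1_inv (b \<otimes> v)))"

lemma linear_left_T1_inv: "Vector_Spaces.linear sT sT (left_T1_inv b)"
  and left_T1_inv_tensor: "left_T1_inv b (u \<otimes> v) = left_c1 u (T1_inv (b \<otimes> v))"
  unfolding left_T1_inv_def
  by (rule tlift_AA[OF vs_T linear_left_c1_param
        lin_comp[OF lin_comp[OF AA.linear_tz_right linear_T1_inv] linear_left_c1]])+

lemma T1_left_T1_inv: "T1 (left_T1_inv b w) = right_a1 b (T1 w)"
  by (rule tensor_ext[OF lin_comp[OF linear_left_T1_inv linear_T1] lin_comp[OF linear_T1 linear_right_a1]])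
    (simp add: left_T1_inv_tensor T1_left_c1 T1_T1_inv right_a1_T1)

lemma T1_inv_mult: "T1_inv ((a \<cdot> b) \<otimes> x) = left_T1_inv b (T1_inv (a \<otimes> x))"
proof -
  have "T1 (left_T1_inv b (T1_inv (a \<otimes> x))) = (a \<cdot> b) \<otimes> x"
    by (simp add: T1_left_T1_inv T1_T1_inv right_a1_tensor)
  then show ?thesis
    by (rule T1_inv_eqI)
qed

lemma mu_left_T1_inv: "\<mu> (left_T1_inv b w) = sA (e b) (\<mu> w)"
  by (rule tensor_ext[OF lin_comp[OF linear_left_T1_inv linear_mu] lin_scale_right[OF linear_mu]])
    (simp add: left_T1_inv_tensor mu_left_c1 mu_T1_inv eps_id_tensor lin_scale[OF linear_mult_right] mu_tensor)

lemma eps_mult: "e (a \<cdot> b) = e a * e b"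
proof (cases "\<exists>x::'a. x \<noteq> 0")
  case True
  then obtain x :: 'a where "x \<noteq> 0"
    by blast
  have "sA (e (a \<cdot> b)) x = \<mu> (left_T1_inv b (T1_inv (a \<otimes> x)))"
    by (simp add: T1_inv_mult[symmetric] mu_T1_inv eps_id_tensor)
  also have "\<dots> = sA (e a * e b) x"
    by (simp add: mu_left_T1_inv mu_T1_inv eps_id_tensor mult.commute)
  finally show ?thesis
    using \<open>x \<noteq> 0\<close> by simp
next
  case False
  then show ?thesis
    by (metis lin_zero[OF linear_eps] mult_zero_left)
qed

lemma eps_id_left_c1: "eps_id (left_c1 u y) = sA (e u) (eps_id y)"
  by (rule tensor_ext[OF lin_comp[OF linear_left_c1 linear_eps_id] lin_scale_right[OF linear_eps_id]])
    (simp add: left_c1_tensor eps_id_tensor eps_mult)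

lemma eps_id_left_T1_inv: "eps_id (left_T1_inv b w) = S b (eps_id w)"
  by (rule tensor_ext[OF lin_comp[OF linear_left_T1_inv linear_eps_id] lin_comp[OF linear_eps_id linear_S]])
    (simp add: left_T1_inv_tensor eps_id_left_c1 eps_id_tensor S_eq[symmetric] lin_scale[OF linear_S])

lemma S_mult: "S (a \<cdot> b) x = S b (S a x)"
  by (simp add: S_eq T1_inv_mult eps_id_left_T1_inv)

lemma id_eps_left_c1: "id_eps (left_c1 y z) = y \<cdot> id_eps z"
  by (rule tensor_ext[OF lin_comp[OF linear_left_c1 linear_id_eps] lin_comp[OF linear_id_eps linear_mult_right]])
    (simp add: tensor_simps id_eps_tensor lin_scale[OF linear_mult_right])

lemma id_eps_right_a1: "id_eps (right_a1 b z) = id_eps z \<cdot> b"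
  by (rule tensor_ext[OF lin_comp[OF linear_right_a1 linear_id_eps] lin_comp[OF linear_id_eps linear_mult_left]])
    (simp add: tensor_simps id_eps_tensor lin_scale[OF linear_mult_left])

lemma id_eps_flip: "id_eps (\<sigma> z) = eps_id z"
  by (rule tensor_ext[OF lin_comp[OF linear_flip linear_id_eps] linear_eps_id])
    (simp add: tensor_simps id_eps_tensor eps_id_tensor)

lemma id_eps_left_1b: "id_eps (left_1b p z) = sA (e p) (id_eps z)"
  by (rule tensor_ext[OF lin_comp[OF linear_left_1b linear_id_eps] lin_scale_right[OF linear_id_eps]])
    (simp add: tensor_simps id_eps_tensor eps_mult mult.commute)

end


section \<open>Regular generalized multiplier Hopf coquasigroups\<close>

locale regular_multiplier_hopf_coquasigroup =
  multiplier_hopf_coquasigroup sA sT sU m tp tq DL DR e +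
  cop: multiplier_hopf_coquasigroup sA sT sU m tp tq "copL sT tp DL" "copL sT tp DR" e'
  for sA :: "'k::field \<Rightarrow> 'a::ab_group_add \<Rightarrow> 'a"
    and sT :: "'k \<Rightarrow> 't::ab_group_add \<Rightarrow> 't"
    and sU :: "'k \<Rightarrow> 'u::ab_group_add \<Rightarrow> 'u"
    and m :: "'a \<Rightarrow> 'a \<Rightarrow> 'a" (infixl "\<cdot>" 70)
    and tp :: "'a \<Rightarrow> 'a \<Rightarrow> 't" (infix "\<otimes>" 65)
    and tq :: "'a \<Rightarrow> 't \<Rightarrow> 'u"
    and DL DR :: "'a \<Rightarrow> 't \<Rightarrow> 't"
    and e e' :: "'a \<Rightarrow> 'k" +
  assumes nontrivial: "\<exists>x::'a. x \<noteq> 0"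
begin

text \<open>The Galois maps of \<open>\<Delta>\<^sup>c\<^sup>o\<^sup>p\<close>, flipped back:
  \<open>T3 (p \<otimes> q) = (1 \<otimes> p)\<Delta>(q)\<close> and \<open>T4 (a \<otimes> b) = \<Delta>(a)(b \<otimes> 1)\<close>.\<close>

abbreviation "T3 z \<equiv> \<sigma> (cop.T2 z)"
abbreviation "T4 z \<equiv> \<sigma> (cop.T1 z)"

lemma linear_T3: "Vector_Spaces.linear sT sT (\<lambda>z. T3 z)"
  by (rule lin_comp[OF cop.linear_T2 linear_flip])

lemma linear_T4: "Vector_Spaces.linear sT sT (\<lambda>z. T4 z)"
  by (rule lin_comp[OF cop.linear_T1 linear_flip])

lemma tmult_T3_tensor: "x \<star> T3 (p \<otimes> q) = DR q (right_1c p x)"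
  by (simp add: tmult_flip_right cop.tmult_T2_tensor copL_def flip_flip flip_right_a1)

lemma T4_tensor_tmult: "T4 (a \<otimes> b) \<star> y = DL a (left_c1 b y)"
  by (simp add: tmult_flip_left cop.T1_tensor_tmult copL_def flip_flip flip_left_1b)

lemma T2_tensor_tmult: "T2 (c \<otimes> a) \<star> w = left_c1 c (DL a w)"
  by (rule eq_by_tmult_left) (simp add: tmult_assoc[symmetric] tmult_T2_tensor DR_tmult right_a1_tmult)

lemma right_a1_T2: "right_a1 b (T2 (c \<otimes> a)) = left_c1 c (T4 (a \<otimes> b))"
  by (rule eq_by_tmult_right) (simp add: right_a1_tmult T2_tensor_tmult left_c1_tmult T4_tensor_tmult)

lemma eps_cop_eq: "e' = e"
proof -
  have "id_eps (right_a1 b (T2 w)) = cop.id_eps (right_a1 b (T2 w))" for b w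
  proof (rule tensor_ext[OF lin_comp[OF lin_comp[OF linear_T2 linear_right_a1] linear_id_eps]
        lin_comp[OF lin_comp[OF linear_T2 linear_right_a1] cop.linear_id_eps]])
    fix c a
    have "id_eps (right_a1 b (T2 (c \<otimes> a))) = (c \<cdot> a) \<cdot> b"
      by (simp add: id_eps_right_a1 id_eps_T2 mu_tensor)
    moreover have "cop.id_eps (right_a1 b (T2 (c \<otimes> a))) = c \<cdot> (a \<cdot> b)"
      by (simp add: right_a1_T2 cop.id_eps_left_c1 cop.id_eps_flip cop.eps_id_T1 mu_tensor)
    ultimately show "id_eps (right_a1 b (T2 (c \<otimes> a))) = cop.id_eps (right_a1 b (T2 (c \<otimes> a)))"
      by (simp add: m_assoc)
  qed
  from this[of b "T2_inv (u \<otimes> v)" for b u v]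
  have eq: "sA (e v) (u \<cdot> b) = sA (e' v) (u \<cdot> b)" for u v b
    by (simp add: T2_T2_inv right_a1_tensor id_eps_tensor cop.id_eps_tensor)
  show ?thesis
  proof
    fix v
    show "e' v = e v"
    proof (rule ccontr)
      assume ne: "e' v \<noteq> e v"
      have "u \<cdot> b = 0" for u b
        using eq[of v u b] ne by simp
      then have "(u::'a) = 0" for u
        by (rule nondegenerate_left)
      from this[of v] ne show False
        by (simp add: lin_zero[OF linear_eps] lin_zero[OF cop.linear_eps])
    qed
  qed
qed

lemma cop_eps_id_eq: "cop.eps_id = eps_id"
  and cop_id_eps_eq: "cop.id_eps = id_eps"
  by (simp_all add: eps_cop_eq)

lemma left_c1_T3_tensor: "left_c1 y (T3 (p \<otimes> q)) = DR q (y \<otimes> p)"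
  by (rule eq_by_tmult_left)
    (simp add: right_a1_tmult[symmetric] tmult_T3_tensor right_1c_right_a1 DR_tmult_right)

lemma left_c1_T3_tensor_left_1b: "left_c1 x (T3 (p \<otimes> q)) = left_1b p (T2 (x \<otimes> q))"
  by (rule eq_by_tmult_left)
    (simp add: right_a1_tmult[symmetric] tmult_T3_tensor right_1c_tmult[symmetric] tmult_T2_tensor
      right_1c_right_a1_commute)

lemma T2_rmul_S_id_T1: "T2 (rmul_S_id y (T1 z)) = left_c1 y (T3 z)"
proof (rule tensor_ext[OF lin_comp[OF lin_comp[OF linear_T1 linear_rmul_S_id] linear_T2]
      lin_comp[OF linear_T3 linear_left_c1]])
  show "T2 (rmul_S_id y (T1 (p \<otimes> q))) = left_c1 y (T3 (p \<otimes> q))" for p q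
    by (simp add: coquasigroup_right[symmetric] T2_right_1c T2_T2_inv left_c1_T3_tensor)
qed

lemma exists_eps_eq_1: "\<exists>b. e b = 1"
proof -
  obtain x :: 'a where "x \<noteq> 0"
    using nontrivial by blast
  then obtain y where xy: "x \<cdot> y \<noteq> 0"
    using nondegenerate_left by blast
  have "\<exists>b. e b \<noteq> 0"
  proof (rule ccontr)
    assume "\<nexists>b. e b \<noteq> 0"
    then have e0: "e b = 0" for b
      by blast
    have "eps_id w = 0" for w
      by (rule tensor_ext[OF linear_eps_id lin_const_zero[OF vs_T vs_A]]) (simp add: eps_id_tensor e0)
    with xy show False
      using eps_id_T1_tensor[of x y] by simp
  qed
  then obtain b where "e b \<noteq> 0"
    by blast
  then have "e (sA (inverse (e b)) b) = 1"
    by (simp add: lin_scale[OF linear_eps])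
  then show ?thesis
    by blast
qed

text \<open>\<open>SA a\<close> is the element of \<open>A\<close> representing the multiplier \<open>S(a)\<close>, see
  \<open>S_eq_mult_SA\<close>.\<close>

definition b0 :: 'a where
  "b0 = (SOME b. e b = 1)"

lemma eps_b0: "e b0 = 1"
  unfolding b0_def using someI_ex[OF exists_eps_eq_1] .

definition SA :: "'a \<Rightarrow> 'a" where
  "SA a = id_eps (T2_inv (T3 (T1_inv (a \<otimes> b0))))"

lemma left_c1_SA_witness: "left_c1 y (T2_inv (T3 (T1_inv (a \<otimes> b0)))) = rmul_S y a \<otimes> b0"
proof -
  have "left_c1 y (T2_inv (T3 (T1_inv (a \<otimes> b0)))) = T2_inv (left_c1 y (T3 (T1_inv (a \<otimes> b0))))"
    by (simp add: T2_inv_left_c1)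
  also have "\<dots> = T2_inv (T2 (rmul_S_id y (T1 (T1_inv (a \<otimes> b0)))))"
    by (simp add: T2_rmul_S_id_T1)
  also have "\<dots> = rmul_S y a \<otimes> b0"
    by (simp add: T2_inv_T2 T1_T1_inv rmul_S_id_tensor)
  finally show ?thesis .
qed

lemma mult_SA: "y \<cdot> SA a = rmul_S y a"
  by (simp add: SA_def id_eps_left_c1[symmetric] left_c1_SA_witness id_eps_tensor eps_b0)

lemma S_eq_mult_SA: "S a x = SA a \<cdot> x"
  by (rule eq_by_mult_left) (simp add: mult_S mult_SA[symmetric] m_assoc)

lemma linear_SA: "Vector_Spaces.linear sA sA SA"
  unfolding SA_def
  by (rule lin_comp[OF lin_comp[OF lin_comp[OF lin_comp[OF AA.linear_tz_left linear_T1_inv] linear_T3]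
        linear_T2_inv] linear_id_eps])

lemma SA_mult: "SA (a \<cdot> b) = SA b \<cdot> SA a"
proof (rule eq_by_mult_right)
  show "SA (a \<cdot> b) \<cdot> x = (SA b \<cdot> SA a) \<cdot> x" for x
    using S_mult[of a b x] by (simp only: S_eq_mult_SA m_assoc)
qed

definition SA_id :: "'t \<Rightarrow> 't" where
  "SA_id = tlift sT sT tp (\<lambda>u v. SA u \<otimes> v)"

definition id_SA :: "'t \<Rightarrow> 't" where
  "id_SA = tlift sT sT tp (\<lambda>u v. u \<otimes> SA v)"

lemma linear_SA_id: "Vector_Spaces.linear sT sT SA_id"
  and SA_id_tensor: "SA_id (u \<otimes> v) = SA u \<otimes> v"
  unfolding SA_id_def by (rule tlift_AA[OF vs_T lin_comp[OF linear_SA AA.linear_tz_left] AA.linear_tz_right])+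

lemma linear_id_SA: "Vector_Spaces.linear sT sT id_SA"
  and id_SA_tensor: "id_SA (u \<otimes> v) = u \<otimes> SA v"
  unfolding id_SA_def by (rule tlift_AA[OF vs_T AA.linear_tz_left lin_comp[OF linear_SA AA.linear_tz_right]])+

lemma left_c1_SA_id: "left_c1 y (SA_id v) = rmul_S_id y v"
  by (rule tensor_ext[OF lin_comp[OF linear_SA_id linear_left_c1] linear_rmul_S_id])
    (simp add: SA_id_tensor left_c1_tensor rmul_S_id_tensor mult_SA)

lemma SA_id_T1: "SA_id (T1 z) = T2_inv (T3 z)"
proof -
  have "T2 (SA_id (T1 z)) = T3 z"
    by (rule eq_by_left_c1) (simp add: T2_left_c1[symmetric] left_c1_SA_id T2_rmul_S_id_T1)
  then show ?thesis
    by (rule T2_inv_eqI[symmetric])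
qed

lemma id_eps_T3: "id_eps (T3 z) = eps_id z"
proof (rule tensor_ext[OF lin_comp[OF linear_T3 linear_id_eps] linear_eps_id])
  show "id_eps (T3 (p \<otimes> q)) = eps_id (p \<otimes> q)" for p q
  proof (rule eq_by_mult_left)
    fix x
    have "x \<cdot> id_eps (T3 (p \<otimes> q)) = id_eps (left_1b p (T2 (x \<otimes> q)))"
      by (simp add: id_eps_left_c1[symmetric] left_c1_T3_tensor_left_1b)
    also have "\<dots> = x \<cdot> eps_id (p \<otimes> q)"
      by (simp add: id_eps_left_1b id_eps_T2 mu_tensor eps_id_tensor lin_scale[OF linear_mult_right])
    finally show "x \<cdot> id_eps (T3 (p \<otimes> q)) = x \<cdot> eps_id (p \<otimes> q)" .
  qed
qed

lemma mu_SA_id_T1: "\<mu> (SA_id (T1 z)) = eps_id z"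
  by (simp add: SA_id_T1 mu_T2_inv id_eps_T3)

lemma mu_id_SA_T2: "\<mu> (id_SA (T2 z)) = id_eps z"
proof (rule eq_by_mult_right)
  fix w
  have "\<mu> (right_1c w (id_SA v)) = \<mu> (id_S_mul w v)" for v
    by (rule tensor_ext[OF lin_comp[OF lin_comp[OF linear_id_SA linear_right_1c] linear_mu]
          lin_comp[OF linear_id_S_mul linear_mu]])
      (simp add: id_SA_tensor right_1c_tensor id_S_mul_tensor mu_tensor S_eq_mult_SA m_assoc)
  then show "\<mu> (id_SA (T2 z)) \<cdot> w = id_eps z \<cdot> w"
    by (simp add: mu_right_1c[symmetric] mu_id_S_mul_T2)
qed

lemma right_1c_T4: "right_1c w (T4 (u \<otimes> v)) = right_a1 v (T1 (u \<otimes> w))"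
  by (rule eq_by_tmult_right)
    (simp add: right_1c_tmult T4_tensor_tmult right_a1_tmult T1_tensor_tmult left_c1_left_1b)

lemma SA_id_right_1c: "SA_id (right_1c w v) = right_1c w (SA_id v)"
  by (rule tensor_ext[OF lin_comp[OF linear_right_1c linear_SA_id] lin_comp[OF linear_SA_id linear_right_1c]])
    (simp add: SA_id_tensor right_1c_tensor)

lemma mu_SA_id_right_a1: "\<mu> (SA_id (right_a1 v x)) = SA v \<cdot> \<mu> (SA_id x)"
  by (rule tensor_ext[OF lin_comp[OF lin_comp[OF linear_right_a1 linear_SA_id] linear_mu]
        lin_comp[OF lin_comp[OF linear_SA_id linear_mu] linear_mult_right]])
    (simp add: SA_id_tensor right_a1_tensor mu_tensor SA_mult m_assoc)

lemma id_SA_left_c1: "id_SA (left_c1 x v) = left_c1 x (id_SA v)"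
  by (rule tensor_ext[OF lin_comp[OF linear_left_c1 linear_id_SA] lin_comp[OF linear_id_SA linear_left_c1]])
    (simp add: id_SA_tensor left_c1_tensor)

lemma mu_id_SA_left_1b: "\<mu> (id_SA (left_1b u x)) = \<mu> (id_SA x) \<cdot> SA u"
  by (rule tensor_ext[OF lin_comp[OF lin_comp[OF linear_left_1b linear_id_SA] linear_mu]
        lin_comp[OF lin_comp[OF linear_id_SA linear_mu] linear_mult_left]])
    (simp add: id_SA_tensor left_1b_tensor mu_tensor SA_mult m_assoc)

lemma mu_SA_id_T4: "\<mu> (SA_id (T4 z)) = SA (eps_id z)"
proof (rule tensor_ext[OF lin_comp[OF lin_comp[OF linear_T4 linear_SA_id] linear_mu]
      lin_comp[OF linear_eps_id linear_SA]])
  fix u v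
  show "\<mu> (SA_id (T4 (u \<otimes> v))) = SA (eps_id (u \<otimes> v))"
  proof (rule eq_by_mult_right)
    fix w
    have "\<mu> (SA_id (T4 (u \<otimes> v))) \<cdot> w = SA v \<cdot> \<mu> (SA_id (T1 (u \<otimes> w)))"
      by (simp add: mu_right_1c[symmetric] SA_id_right_1c[symmetric] right_1c_T4 mu_SA_id_right_a1)
    also have "\<dots> = SA (eps_id (u \<otimes> v)) \<cdot> w"
      by (simp add: mu_SA_id_T1 eps_id_tensor lin_scale[OF linear_SA] lin_scale[OF linear_mult_right]
          lin_scale[OF linear_mult_left])
    finally show "\<mu> (SA_id (T4 (u \<otimes> v))) \<cdot> w = SA (eps_id (u \<otimes> v)) \<cdot> w" .
  qed
qed

lemma mu_id_SA_T3: "\<mu> (id_SA (T3 z)) = SA (id_eps z)"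
proof (rule tensor_ext[OF lin_comp[OF lin_comp[OF linear_T3 linear_id_SA] linear_mu]
      lin_comp[OF linear_id_eps linear_SA]])
  fix u v
  show "\<mu> (id_SA (T3 (u \<otimes> v))) = SA (id_eps (u \<otimes> v))"
  proof (rule eq_by_mult_left)
    fix x
    have "x \<cdot> \<mu> (id_SA (T3 (u \<otimes> v))) = \<mu> (id_SA (T2 (x \<otimes> v))) \<cdot> SA u"
      by (simp add: mu_left_c1[symmetric] id_SA_left_c1[symmetric] left_c1_T3_tensor_left_1b
          mu_id_SA_left_1b)
    also have "\<dots> = x \<cdot> SA (id_eps (u \<otimes> v))"
      by (simp add: mu_id_SA_T2 id_eps_tensor lin_scale[OF linear_SA] lin_scale[OF linear_mult_right]
          lin_scale[OF linear_mult_left])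
    finally show "x \<cdot> \<mu> (id_SA (T3 (u \<otimes> v))) = x \<cdot> SA (id_eps (u \<otimes> v))" .
  qed
qed

context
  fixes g :: "'a \<Rightarrow> 'a"
  assumes cop_S_eq: "\<And>a x. cop.S a x = g a \<cdot> x"
begin

lemma cop_rmul_S_eq: "cop.rmul_S y b = y \<cdot> g b"
  by (rule eq_by_mult_right) (simp add: cop.mult_S[symmetric] cop_S_eq m_assoc)

lemma cop_S_mult: "g (a \<cdot> b) = g b \<cdot> g a"
proof (rule eq_by_mult_right)
  show "g (a \<cdot> b) \<cdot> x = (g b \<cdot> g a) \<cdot> x" for x
    using cop.S_mult[of a b x] by (simp only: cop_S_eq m_assoc)
qed

lemma SA_mult_SA_cop: "SA x \<cdot> SA (g a) = SA x \<cdot> a"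
proof -
  let ?z = "cop.T1_inv (a \<otimes> x)"
  have "SA x \<cdot> a = \<mu> (SA_id (T4 ?z))"
    by (simp add: cop.T1_T1_inv flip_tensor SA_id_tensor mu_tensor)
  also have "\<dots> = SA (cop.S a x)"
    by (simp add: mu_SA_id_T4 cop.S_eq cop_eps_id_eq)
  also have "\<dots> = SA x \<cdot> SA (g a)"
    by (simp add: cop_S_eq SA_mult)
  finally show ?thesis ..
qed

lemma SA_cop_mult_SA: "SA (g b) \<cdot> SA y = b \<cdot> SA y"
proof -
  let ?z = "cop.T2_inv (y \<otimes> b)"
  have "b \<cdot> SA y = \<mu> (id_SA (T3 ?z))"
    by (simp add: cop.T2_T2_inv flip_tensor id_SA_tensor mu_tensor)
  also have "\<dots> = SA (cop.rmul_S y b)"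
    by (simp add: mu_id_SA_T3 cop.rmul_S_def cop_id_eps_eq)
  also have "\<dots> = SA (g b) \<cdot> SA y"
    by (simp add: cop_rmul_S_eq SA_mult)
  finally show ?thesis ..
qed

lemma SA_left_inverse: "SA (g a) = a"
proof -
  define z where "z a = SA (g a) - a" for a
  have left: "SA x \<cdot> z a = 0" for x a
    using SA_mult_SA_cop[of x a] by (simp add: z_def lin_diff[OF linear_mult_right])
  have right: "z b \<cdot> SA y = 0" for b y
    using SA_cop_mult_SA[of b y] by (simp add: z_def lin_diff[OF linear_mult_left])
  have z_mult: "z (q \<cdot> a) = q \<cdot> z a" for q a
  proof -
    have "z (q \<cdot> a) - q \<cdot> z a = z q \<cdot> SA (g a)"
      by (simp add: z_def cop_S_mult SA_mult lin_diff[OF linear_mult_right] lin_diff[OF linear_mult_left])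
    then show ?thesis
      using right by simp
  qed
  have annihilated: "\<mu> (SA_id v) \<cdot> z a = 0" for v
  proof (rule tensor_ext[OF lin_comp[OF lin_comp[OF linear_SA_id linear_mu] linear_mult_left]
        lin_const_zero[OF vs_T vs_A]])
    fix p q
    have "\<mu> (SA_id (p \<otimes> q)) \<cdot> z a = SA p \<cdot> z (q \<cdot> a)"
      by (simp add: SA_id_tensor mu_tensor m_assoc z_mult)
    then show "\<mu> (SA_id (p \<otimes> q)) \<cdot> z a = 0"
      by (simp add: left)
  qed
  have "y \<cdot> z a = 0" for y
    using annihilated[of "T1 (b0 \<otimes> y)"] by (simp add: mu_SA_id_T1 eps_id_tensor eps_b0)
  then have "z a = 0"
    by (rule nondegenerate_right)
  then show ?thesis
    by (simp add: z_def)
qed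

end

end

theorem proposition3p1:
  fixes sA :: "'k::field \<Rightarrow> 'a::ab_group_add \<Rightarrow> 'a"
    and sT :: "'k \<Rightarrow> 't::ab_group_add \<Rightarrow> 't"
    and sU :: "'k \<Rightarrow> 'u::ab_group_add \<Rightarrow> 'u"
    and m :: "'a \<Rightarrow> 'a \<Rightarrow> 'a"
    and tp :: "'a \<Rightarrow> 'a \<Rightarrow> 't" and tq :: "'a \<Rightarrow> 't \<Rightarrow> 'u"
    and DL DR :: "'a \<Rightarrow> 't \<Rightarrow> 't"
    and eps eps_cop :: "'a \<Rightarrow> 'k"
  assumes hopf: "gmhc sA sT sU m tp tq DL DR eps"
    and regular: "gmhc sA sT sU m tp tq (copL sT tp DL) (copL sT tp DR) eps_cop"
  shows "eps_cop = eps \<and>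
    (\<exists>f g :: 'a \<Rightarrow> 'a.
        (\<forall>a b. gS sA sT tp m DL eps a b = m (f a) b) \<and>
        (\<forall>a b. gS sA sT tp m (copL sT tp DL) eps_cop a b = m (g a) b) \<and>
        (\<forall>a. g (f a) = a) \<and> (\<forall>a. f (g a) = a))"
proof -
  interpret H: multiplier_hopf_coquasigroup sA sT sU m tp tq DL DR eps
    by (rule gmhc_imp_multiplier_hopf_coquasigroup[OF hopf])
  interpret H': multiplier_hopf_coquasigroup sA sT sU m tp tq "copL sT tp DL" "copL sT tp DR" eps_cop
    by (rule gmhc_imp_multiplier_hopf_coquasigroup[OF regular])
  show ?thesis
  proof (cases "\<exists>x::'a. x \<noteq> 0")
    case False
    then have zero: "x = 0" for x :: 'a
      by blast
    have "eps_cop x = eps x" for x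
      using zero[of x] lin_zero[OF H.linear_eps] lin_zero[OF H'.linear_eps] by simp
    moreover have "u = v" for u v :: 'a
      using zero[of u] zero[of v] by simp
    ultimately show ?thesis
      by blast
  next
    case True
    interpret R: regular_multiplier_hopf_coquasigroup sA sT sU m tp tq DL DR eps eps_cop
      by (intro regular_multiplier_hopf_coquasigroup.intro regular_multiplier_hopf_coquasigroup_axioms.intro
          H.multiplier_hopf_coquasigroup_axioms H'.multiplier_hopf_coquasigroup_axioms True)
    interpret R': regular_multiplier_hopf_coquasigroup sA sT sU m tp tq
        "copL sT tp DL" "copL sT tp DR" eps_cop eps
      by (intro regular_multiplier_hopf_coquasigroup.intro regular_multiplier_hopf_coquasigroup_axioms.intro
          H'.multiplier_hopf_coquasigroup_axioms True)
        (simp add: H.copL_copL H.multiplier_hopf_coquasigroup_axioms)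
    have "R'.SA (R.SA a) = a" for a
      by (rule R'.SA_left_inverse) (simp add: H.copL_copL R.S_eq_mult_SA)
    moreover have "R.SA (R'.SA a) = a" for a
      by (rule R.SA_left_inverse) (rule R'.S_eq_mult_SA)
    ultimately show ?thesis
      using R.eps_cop_eq R.S_eq_mult_SA R'.S_eq_mult_SA by blast
  qed
qed

end
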